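(* Let $0<a_1<a_2<\cdots<a_n$ be task lengths, $A_i:=a_1+\cdots+a_i$, and for $i\le j$, $A_{i:j}:=\sum_{k=i}^j a_k$. For a permutation $\pi$ of $\{1,\dots,n\}$ let $A_{\pi(i)}:=a_{\pi(1)}+\cdots+a_{\pi(i)}$. Let the disruption intensity be $\lambda(t)=\bar\lambda f(t)$ with $\bar\lambda>0$ and $f$ a positive differentiable function on $[0,\infty)$ with $f_-:=\inf_{t\ge0}f(t)>0$ and $f_+:=\sup_{t\ge0}f(t)<\infty$. Assume $\bar\lambda\le \frac{1}{2f_+a_n}$. (i) Suppose $f$ is strictly decreasing on $[0,A_n]$ and that for every permutation $\pi\neq\mathrm{id}$, $$\bar\lambda<\frac{\sum_{i=1}^n a_{\pi(i)}\int_0^{A_{\pi(i)}}f(s)\,ds-\sum_{i=1}^n a_i\int_0^{A_i}f(s)\,ds}{(f_+)^2A_n\sum_{i=1}^n a_i^2+(f_+)^2\frac34(A_n)^3}.$$ Then SPT is optimal: $M_{1:n}(0)<M_{\pi(1):\pi(n)}(0)$ for every permutation $\pi\ne\mathrm{id}$. (ii) Suppose $f$ is strictly increasing on $[0,A_n]$ and that for every permutation $\pi$ with $(\pi(1),\dots,\pi(n))\neq(n,n-1,\dots,1)$, $$\bar\lambda<\frac{\sum_{i=1}^n a_{\pi(i)}\int_0^{A_{\pi(i)}}f(s)\,ds-\sum_{i=1}^n a_{n+1-i}\int_0^{A_{n+1-i:n}}f(s)\,ds}{(f_+)^2A_n\sum_{i=1}^n a_i^2+(f_+)^2\frac34(A_n)^3}.$$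 Then LPT is optimal: $M_{n:1}(0)<M_{\pi(1):\pi(n)}(0)$ for every such permutation $\pi$.
   Context: Model: a single machine processes a finite batch of tasks one at a time in a fixed order. A task of length $c>0$ requires $c$ units of uninterrupted processing. Disruptions occur at the points of a non-homogeneous Poisson process on $[0,\infty)$ with intensity function $\lambda(t)$. If a disruption occurs while a task is being processed, all work on it is lost and that task is restarted from scratch at the disruption time (no repair time); a task is completed once it has been processed for $c$ consecutive time units with no disruption, and the machine then immediately starts the next task. For a permutation $\pi$ of $\{1,\dots,n\}$, $M_{\pi(1):\pi(n)}(t)$ denotes the expected time, measured from $t$, to complete all tasks in the order $a_{\pi(1)},\dots,a_{\pi(n)}$ when processing of $a_{\pi(1)}$ starts at time $t$; $M_{1:n}$ corresponds to the identity (SPT order, increasing lengths) and $M_{n:1}$ to the order $a_n,\dots,a_1$ (LPT order, decreasing lengths). *)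

theory Defs
  imports "HOL-Probability.Probability"
begin

definition cum_int :: "(real \<Rightarrow> real) \<Rightarrow> real \<Rightarrow> real" where
  "cum_int lam t = integral {0..t} lam"

definition exp_space :: "(nat \<Rightarrow> real) measure" where
  "exp_space = PiM UNIV (\<lambda>_. density lborel (exponential_density 1))"

text \<open>Disruption times of the non-homogeneous Poisson process with intensity lam,
  obtained by the time change of a unit-rate Poisson process with arrival times
  w 0, w 0 + w 1, ...: the points s >= 0 with Lambda(s) equal to some arrival time.\<close>
definition disruptions :: "(real \<Rightarrow> real) \<Rightarrow> (nat \<Rightarrow> real) \<Rightarrow> real set" where
  "disruptions lam w = {s. 0 \<le> s \<and> (\<exists>k. cum_int lam s = (\<Sum>i\<le>k. w i))}"

text \<open>Completion time of one task of length c started at t, given disruption set D: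
  the task is (re)started at t and at each later disruption; it completes at u + c for
  the first (re)start time u with no disruption in (u, u + c).\<close>
definition task_finish :: "real set \<Rightarrow> real \<Rightarrow> real \<Rightarrow> real" where
  "task_finish D t c = Inf {u + c | u. (u = t \<or> (u \<in> D \<and> t < u)) \<and> D \<inter> {u<..<u+c} = {}}"

fun seq_finish :: "real set \<Rightarrow> real \<Rightarrow> real list \<Rightarrow> real" where
  "seq_finish D t [] = t"
| "seq_finish D t (c # cs) = seq_finish D (task_finish D t c) cs"

definition exp_makespan :: "(real \<Rightarrow> real) \<Rightarrow> real list \<Rightarrow> real \<Rightarrow> ennreal" where
  "exp_makespan lam cs t =
     (\<integral>\<^sup>+ w. ennreal (seq_finish (disruptions lam w) t cs - t) \<partial>exp_space)"

definition sched :: "(nat \<Rightarrow> real) \<Rightarrow> nat \<Rightarrow> (nat \<Rightarrow> nat) \<Rightarrow> real list" where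
  "sched a n \<pi> = map (\<lambda>i. a (\<pi> i)) [1..<n+1]"

end

theory Submission
  imports Defs
begin

text \<open>Time-changing by the cumulative intensity \<open>Lam\<close> turns the disruptions into a unit-rate
  Poisson process of levels, so the expected makespan of a schedule, truncated after \<open>N\<close> restarts,
  satisfies a renewal equation in the start time. Solving it to first order shows that the expected
  makespan of tasks \<open>c\<^sub>1, \<dots>, c\<^sub>n\<close> with completion times \<open>C\<^sub>i\<close> is \<open>\<Sum> c\<^sub>i + \<Sum> c\<^sub>i Lam (C\<^sub>i)\<close>
  minus the integral of \<open>Lam\<close> over \<open>[0, C\<^sub>n]\<close>, up to an error of at most \<open>\<kappa> C\<^sub>n \<Sum> c\<^sub>i\<^sup>2\<close> either
  way, provided \<open>lM c\<^sub>i \<le> 1/2\<close>. The bound survives \<open>N \<rightarrow> \<infinity>\<close> because almost surely every run of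
  restarts ends at a level gap of at least \<open>1/2\<close>. Only \<open>\<Sum> c\<^sub>i Lam (C\<^sub>i)\<close> depends on the order
  of the tasks, and the smallness hypothesis on the intensity makes its gap between the claimed
  optimal order and any other order exceed twice the error.\<close>

lemma restart_list_induct [case_names Nil Cons]:
  assumes "\<And>N. P N []"
    and "\<And>N c cs. P N cs \<Longrightarrow> (\<And>M. N = Suc M \<Longrightarrow> P M (c # cs)) \<Longrightarrow> P N (c # cs)"
  shows "P N cs"
proof (induction "N + length cs" arbitrary: N cs rule: less_induct)
  case less
  then show ?case
    using assms by (cases cs) auto
qed

lemma has_integral_linear_decay:
  fixes K c :: real
  assumes "0 \<le> c"
  shows "((\<lambda>u. K * (c - u)) has_integral K * c\<^sup>2 / 2) {0..c}"
proof -
  have "((\<lambda>u. K * (c - u)) has_integral (K * (c * c - c\<^sup>2 / 2) - K * (c * 0 - 0\<^sup>2 / 2))) {0..c}"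
  proof (rule fundamental_theorem_of_calculus)
    fix x :: real
    show "((\<lambda>u. K * (c * u - u\<^sup>2 / 2)) has_vector_derivative K * (c - x)) (at x within {0..c})"
      by (auto intro!: derivative_eq_intros simp: has_real_derivative_iff_has_vector_derivative[symmetric] algebra_simps)
  qed (use assms in auto)
  then show ?thesis by (simp add: power2_eq_square algebra_simps)
qed

lemma exp_minus_has_integral:
  fixes d :: real
  assumes "0 \<le> d"
  shows "has_bochner_integral lborel (\<lambda>s. exp (- s) * indicator {0..d} s) (1 - exp (- d))"
proof -
  have "((\<lambda>s. - exp (- s)) has_real_derivative exp (- x)) (at x)" for x :: real
    by (auto intro!: derivative_eq_intros)
  then show ?thesis
    using assms has_bochner_integral_FTC_Icc_real[of 0 d "\<lambda>s. - exp (- s)" "\<lambda>s. exp (- s)"] by simp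
qed

lemma integrable_bounded_times_indicator_Icc:
  fixes g :: "real \<Rightarrow> real"
  assumes "g \<in> borel_measurable borel" "\<And>s. s \<in> {a..b} \<Longrightarrow> \<bar>g s\<bar> \<le> B"
  shows "integrable lborel (\<lambda>s. g s * indicator {a..b} s)"
  using integrableI_bounded_set_indicator[of "{a..b}" lborel g B] assms
  by (simp add: emeasure_lborel_Icc_eq mult.commute)

lemma sum_list_squares_nonneg: "0 \<le> (\<Sum>x\<leftarrow>xs. (x::real)\<^sup>2)"
  by (induction xs) auto

lemma sum_squares_le_square_sum:
  fixes a :: "'a \<Rightarrow> real"
  assumes "finite I" "\<forall>i\<in>I. 0 \<le> a i"
  shows "(\<Sum>i\<in>I. (a i)\<^sup>2) \<le> (\<Sum>i\<in>I. a i)\<^sup>2"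
proof -
  have "(\<Sum>i\<in>I. (a i)\<^sup>2) \<le> (\<Sum>i\<in>I. a i * (\<Sum>j\<in>I. a j))"
    using assms by (intro sum_mono) (auto simp: power2_eq_square intro!: mult_left_mono member_le_sum)
  also have "\<dots> = (\<Sum>i\<in>I. a i)\<^sup>2"
    by (simp add: sum_distrib_right power2_eq_square)
  finally show ?thesis .
qed

lemma exp_half_le: "exp (1 / 2 :: real) \<le> 7 / 4"
proof -
  have "exp (1 / 2 :: real) ^ 2 = exp 1"
    by (simp add: exp_double[symmetric])
  also have "\<dots> < (7 / 4) ^ 2"
    using e_less_272 by (simp add: power2_eq_square)
  finally show ?thesis
    by (rule power_less_imp_less_base[THEN less_imp_le]) simp
qed

lemma lengths_le_half:
  fixes a :: "nat \<Rightarrow> real"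
  assumes "\<forall>i\<in>{1..n}. 0 < a i" "\<forall>i\<in>{1..n}. a i \<le> a n" "1 \<le> n"
    and "lb \<le> 1 / (2 * fM * a n)" "0 < fM" "0 < lb"
  shows "\<forall>i\<in>{1..n}. 0 < a i \<and> lb * fM * a i \<le> 1 / 2"
proof
  fix i assume "i \<in> {1..n}"
  then have "lb * fM * a i \<le> lb * fM * a n"
    using assms by simp
  also have "\<dots> \<le> 1 / 2"
    using assms by (simp add: field_simps)
  finally show "0 < a i \<and> lb * fM * a i \<le> 1 / 2"
    using assms \<open>i \<in> {1..n}\<close> by simp
qed

lemma bij_betw_reverse: "bij_betw (\<lambda>i. n + 1 - i) {1..n} {1..(n::nat)}"
  by (rule bij_betw_byWitness[where f'="\<lambda>i. n + 1 - i"]) auto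

lemma exp_half_error_le:
  fixes l m A Q :: real
  assumes "0 \<le> A" "0 \<le> Q" "Q \<le> A\<^sup>2"
  shows "exp (1 / 2) * (l * m)\<^sup>2 * A * Q \<le> l\<^sup>2 * (m\<^sup>2 * A * Q + m\<^sup>2 * (3 / 4) * A ^ 3)"
proof -
  have "exp (1 / 2) * ((l * m)\<^sup>2 * A * Q) \<le> 7 / 4 * ((l * m)\<^sup>2 * A * Q)"
    using exp_half_le assms by (intro mult_right_mono) auto
  moreover have "3 / 4 * ((l * m)\<^sup>2 * A) * Q \<le> 3 / 4 * ((l * m)\<^sup>2 * A) * A\<^sup>2"
    using assms by (intro mult_left_mono) auto
  ultimately show ?thesis
    by (simp add: power2_eq_square power3_eq_cube algebra_simps)
qed

lemma sum_reverse_prefix: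
  fixes a :: "nat \<Rightarrow> real"
  assumes "i \<le> n"
  shows "(\<Sum>k=1..i. a (n + 1 - k)) = (\<Sum>k=n + 1 - i..n. a k)"
  by (rule sum.reindex_bij_witness[where i="\<lambda>k. n + 1 - k" and j="\<lambda>k. n + 1 - k"]) (use assms in auto)

lemma sum_list_map_upt: "sum_list (map g [1..<n + 1]) = (\<Sum>k=1..n. g k)"
  by (induction n) auto

lemma frequently_sequentially_Suc: "(\<exists>\<^sub>F i in sequentially. P (Suc i)) \<longleftrightarrow> (\<exists>\<^sub>F i in sequentially. P i)"
  unfolding frequently_def using eventually_sequentially_Suc[of "\<lambda>i. \<not> P i"] by simp

section \<open>Independent exponential level gaps\<close>

abbreviation Exp1 :: "real measure" where
  "Exp1 \<equiv> density lborel (exponential_density 1)"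

lemma prob_space_Exp1: "prob_space Exp1"
  by (rule prob_space_exponential_density) simp

interpretation Exp_seq: sequence_space Exp1
  by (simp add: sequence_space_def product_prob_space_def product_sigma_finite_def
      product_prob_space_axioms_def prob_space_Exp1 prob_space_imp_sigma_finite)

lemma exp_space_eq: "exp_space = Exp_seq.S"
  by (simp add: exp_space_def)

lemma measurable_shift [measurable]:
  "(\<lambda>\<omega>::nat \<Rightarrow> real. \<lambda>i. \<omega> (Suc i)) \<in> measurable Exp_seq.S Exp_seq.S"
  by (rule measurable_PiM_single') (auto simp: space_PiM)

lemma nn_integral_Exp1_const_add:
  assumes "g \<in> borel_measurable borel"
  shows "(\<integral>\<^sup>+ x. ennreal (exponential_density 1 x) * (ennreal c + g x) \<partial>lborel)
    = ennreal c + (\<integral>\<^sup>+ x. ennreal (exponential_density 1 x) * g x \<partial>lborel)"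
proof -
  have "(\<integral>\<^sup>+ x. ennreal (exponential_density 1 x) \<partial>lborel) = 1"
    using prob_space.emeasure_space_1[OF prob_space_Exp1] by (simp add: emeasure_density)
  then show ?thesis
    using assms by (simp add: distrib_left nn_integral_add nn_integral_multc)
qed

lemma nn_integral_exponential_memoryless:
  fixes g :: "real \<Rightarrow> ennreal"
  assumes [measurable]: "g \<in> borel_measurable borel" and "0 \<le> d"
  shows "(\<integral>\<^sup>+ s. indicator {d..} s * ennreal (exponential_density l s) * g s \<partial>lborel)
    = ennreal (exp (- d * l)) * (\<integral>\<^sup>+ x. ennreal (exponential_density l x) * g (d + x) \<partial>lborel)"
proof -
  have "(\<integral>\<^sup>+ s. indicator {d..} s * ennreal (exponential_density l s) * g s \<partial>lborel)
      = (\<integral>\<^sup>+ x. indicator {d..} (d + x) * ennreal (exponential_density l (d + x)) * g (d + x) \<partial>lborel)"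
    by (subst lborel_distr_plus[symmetric, of d], subst nn_integral_distr) auto
  also have "\<dots> = (\<integral>\<^sup>+ x. ennreal (exp (- d * l)) * (ennreal (exponential_density l x) * g (d + x)) \<partial>lborel)"
  proof (rule nn_integral_cong)
    fix x :: real
    show "indicator {d..} (d + x) * ennreal (exponential_density l (d + x)) * g (d + x)
        = ennreal (exp (- d * l)) * (ennreal (exponential_density l x) * g (d + x))"
    proof (cases "0 \<le> x")
      case True
      then have "exponential_density l (d + x) = exp (- d * l) * exponential_density l x"
        using \<open>0 \<le> d\<close> by (simp add: exponential_density_def algebra_simps exp_add[symmetric])
      then show ?thesis
        using True by (simp add: ennreal_mult' mult.assoc)
    qed (simp add: exponential_density_def)
  qed
  also have "\<dots> = ennreal (exp (- d * l)) * (\<integral>\<^sup>+ x. ennreal (exponential_density l x) * g (d + x) \<partial>lborel)"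
    by (rule nn_integral_cmult) simp
  finally show ?thesis .
qed

lemma AE_exp_space_nonneg: "AE \<omega> in exp_space. \<forall>i. 0 \<le> \<omega> i"
proof -
  have "AE x in Exp1. 0 \<le> x"
    by (subst AE_density) (auto simp: exponential_density_def)
  then show ?thesis
    unfolding exp_space_eq AE_all_countable by (intro allI Exp_seq.AE_component) simp
qed

lemma measure_small_gaps_le:
  "measure Exp_seq.S {\<omega> \<in> space Exp_seq.S. \<forall>i\<ge>m. \<omega> i \<le> 1 / 2} \<le> (1 - exp (- 1 / 2)) ^ n"
proof -
  let ?J = "{m..<m + n}"
  have "{\<omega> \<in> space Exp_seq.S. \<forall>i\<ge>m. \<omega> i \<le> 1 / 2} \<subseteq> prod_emb UNIV (\<lambda>_. Exp1) ?J (Pi\<^sub>E ?J (\<lambda>_. {..1 / 2}))"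
    by (auto simp: prod_emb_def space_PiM)
  then have "emeasure Exp_seq.S {\<omega> \<in> space Exp_seq.S. \<forall>i\<ge>m. \<omega> i \<le> 1 / 2}
      \<le> emeasure Exp_seq.S (prod_emb UNIV (\<lambda>_. Exp1) ?J (Pi\<^sub>E ?J (\<lambda>_. {..1 / 2})))"
    by (rule emeasure_mono) (auto intro!: sets_PiM_I)
  also have "\<dots> = (\<Prod>i\<in>?J. emeasure Exp1 {..1 / 2})"
    by (rule Exp_seq.emeasure_PiM_emb) auto
  also have "emeasure Exp1 {..1 / 2} = ennreal (1 - exp (- 1 / 2))"
    by (subst emeasure_erlang_density) (auto simp: erlang_CDF_def)
  finally show ?thesis
    by (simp add: Exp_seq.emeasure_eq_measure ennreal_power)
qed

lemma AE_exp_space_frequently_ge_half: "AE \<omega> in exp_space. \<exists>\<^sub>F i in sequentially. 1 / 2 \<le> \<omega> i"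
proof -
  have "AE \<omega> in Exp_seq.S. \<exists>i\<ge>m. 1 / 2 \<le> \<omega> i" for m
  proof -
    define B where "B = {\<omega> \<in> space Exp_seq.S. \<forall>i\<ge>m. \<omega> i \<le> 1 / 2}"
    have [measurable]: "B \<in> sets Exp_seq.S"
      unfolding B_def by measurable
    have "measure Exp_seq.S B \<le> 0"
      by (rule LIMSEQ_le_const[OF LIMSEQ_power_zero[of "1 - exp (- 1 / 2)"]])
        (use measure_small_gaps_le in \<open>auto simp: B_def\<close>)
    then have "B \<in> null_sets Exp_seq.S"
      by (auto simp: null_sets_def Exp_seq.emeasure_eq_measure measure_nonneg antisym)
    then show ?thesis
      by (rule AE_I') (auto simp: B_def not_le dest: leD intro: less_imp_le)
  qed
  then show ?thesis
    unfolding exp_space_eq frequently_sequentially by (subst AE_all_countable) auto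
qed

section \<open>The cumulative intensity\<close>

locale bounded_intensity =
  fixes lam :: "real \<Rightarrow> real" and lm lM :: real
  assumes continuous_lam: "continuous_on {0..} lam"
    and lm_pos: "0 < lm"
    and lam_lower: "\<And>t. 0 \<le> t \<Longrightarrow> lm \<le> lam t"
    and lam_upper: "\<And>t. 0 \<le> t \<Longrightarrow> lam t \<le> lM"
begin

definition Lam :: "real \<Rightarrow> real" where "Lam = cum_int lam"

lemma lM_pos: "0 < lM"
  using lm_pos lam_lower[of 0] lam_upper[of 0] by simp

lemma integrable_lam: "0 \<le> x \<Longrightarrow> lam integrable_on {x..y}"
  by (rule integrable_continuous_interval) (rule continuous_on_subset[OF continuous_lam], auto)

lemma Lam_nonpos: "t \<le> 0 \<Longrightarrow> Lam t = 0"
  by (cases "t = 0") (auto simp: Lam_def cum_int_def)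

lemma Lam_0 [simp]: "Lam 0 = 0"
  by (simp add: Lam_nonpos)

lemma Lam_max_0: "Lam (max 0 t) = Lam t"
  by (simp add: Lam_nonpos max_def)

lemma Lam_diff: "0 \<le> x \<Longrightarrow> x \<le> y \<Longrightarrow> Lam y - Lam x = integral {x..y} lam"
  using Henstock_Kurzweil_Integration.integral_combine[where a=0 and c=x and b=y and f=lam] integrable_lam[of 0 y]
  by (simp add: Lam_def cum_int_def)

lemma Lam_diff_bounds:
  assumes "0 \<le> x" "x \<le> y"
  shows "lm * (y - x) \<le> Lam y - Lam x" "Lam y - Lam x \<le> lM * (y - x)"
proof -
  have "integral {x..y} (\<lambda>_. lm) \<le> integral {x..y} lam"
    by (rule integral_le) (use assms integrable_lam lam_lower in auto)
  moreover have "integral {x..y} lam \<le> integral {x..y} (\<lambda>_. lM)"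
    by (rule integral_le) (use assms integrable_lam lam_upper in auto)
  ultimately show "lm * (y - x) \<le> Lam y - Lam x" "Lam y - Lam x \<le> lM * (y - x)"
    using assms by (simp_all add: Lam_diff mult.commute)
qed

lemma Lam_increment_bounds:
  assumes "x \<le> y"
  shows "0 \<le> Lam y - Lam x" "Lam y - Lam x \<le> lM * (y - x)"
proof -
  have "lm * (max 0 y - max 0 x) \<le> Lam y - Lam x" "Lam y - Lam x \<le> lM * (max 0 y - max 0 x)"
    using Lam_diff_bounds[of "max 0 x" "max 0 y"] assms by (simp_all add: Lam_max_0)
  moreover have "0 \<le> lm * (max 0 y - max 0 x)" "lM * (max 0 y - max 0 x) \<le> lM * (y - x)"
    using assms lm_pos lM_pos by auto
  ultimately show "0 \<le> Lam y - Lam x" "Lam y - Lam x \<le> lM * (y - x)"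
    by linarith+
qed

lemma Lam_nonneg: "0 \<le> Lam t"
  using Lam_increment_bounds(1)[of "min 0 t" t] Lam_nonpos[of "min 0 t"] by simp

lemma mono_Lam: "mono Lam"
  by (rule monoI) (use Lam_increment_bounds(1) in fastforce)

lemma borel_measurable_Lam [measurable]: "Lam \<in> borel_measurable borel"
  by (rule borel_measurable_mono[OF mono_Lam])

lemma continuous_on_Lam: "continuous_on UNIV Lam"
proof (rule lipschitz_on_continuous_on)
  show "lipschitz_on lM UNIV Lam"
  proof (rule lipschitz_onI)
    fix x y :: real
    show "dist (Lam x) (Lam y) \<le> lM * dist x y"
      using Lam_increment_bounds[of x y] Lam_increment_bounds[of y x]
      by (cases "x \<le> y") (auto simp: dist_real_def abs_if algebra_simps)
  qed (use lM_pos in simp)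
qed

lemma Lam_strict_mono: "0 \<le> x \<Longrightarrow> x < y \<Longrightarrow> Lam x < Lam y"
  using Lam_diff_bounds(1)[of x y] lm_pos by (smt (verit) mult_pos_pos)

lemma Lam_less_iff: "0 \<le> x \<Longrightarrow> 0 \<le> y \<Longrightarrow> Lam x < Lam y \<longleftrightarrow> x < y"
  using Lam_strict_mono[of x y] Lam_strict_mono[of y x] by (cases x y rule: linorder_cases) auto

lemma Lam_le_iff: "0 \<le> x \<Longrightarrow> 0 \<le> y \<Longrightarrow> Lam x \<le> Lam y \<longleftrightarrow> x \<le> y"
  using Lam_less_iff[of y x] by auto

lemma Lam_surj: assumes "0 \<le> p" shows "\<exists>s\<ge>0. Lam s = p"
proof -
  have "p \<le> Lam (p / lm)"
    using Lam_diff_bounds(1)[of 0 "p / lm"] lm_pos assms by simp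
  then show ?thesis
    using IVT'[of Lam 0 p "p / lm"] continuous_on_subset[OF continuous_on_Lam] assms lm_pos by auto
qed

text \<open>Negative levels are clamped to \<open>0\<close>, which makes \<open>Lam_inv\<close> total and monotone.\<close>
definition Lam_inv :: "real \<Rightarrow> real" where
  "Lam_inv p = (THE s. 0 \<le> s \<and> Lam s = max 0 p)"

lemma Lam_inv: "0 \<le> Lam_inv p" "Lam (Lam_inv p) = max 0 p"
proof -
  obtain s where s: "0 \<le> s" "Lam s = max 0 p"
    using Lam_surj[of "max 0 p"] by auto
  then have "\<exists>!s. 0 \<le> s \<and> Lam s = max 0 p"
    using Lam_le_iff by (metis order_antisym order_refl)
  then have "0 \<le> Lam_inv p \<and> Lam (Lam_inv p) = max 0 p"
    unfolding Lam_inv_def by (rule theI')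
  then show "0 \<le> Lam_inv p" "Lam (Lam_inv p) = max 0 p" by auto
qed

lemma Lam_Lam_inv: "0 \<le> p \<Longrightarrow> Lam (Lam_inv p) = p"
  using Lam_inv(2)[of p] by simp

lemma mono_Lam_inv: "mono Lam_inv"
proof (rule monoI)
  fix p q :: real
  assume "p \<le> q"
  then have "Lam (Lam_inv p) \<le> Lam (Lam_inv q)" by (simp add: Lam_inv(2))
  then show "Lam_inv p \<le> Lam_inv q" using Lam_le_iff Lam_inv(1) by blast
qed

lemma borel_measurable_Lam_inv [measurable]: "Lam_inv \<in> borel_measurable borel"
  by (rule borel_measurable_mono[OF mono_Lam_inv])

lemma Lam_inv_le_iff: "0 \<le> s \<Longrightarrow> 0 \<le> p \<Longrightarrow> Lam_inv p \<le> s \<longleftrightarrow> p \<le> Lam s"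
  using Lam_le_iff[of "Lam_inv p" s] Lam_inv(1) Lam_Lam_inv by auto

lemma Lam_inv_shift_ge: "0 \<le> t \<Longrightarrow> 0 \<le> s \<Longrightarrow> t \<le> Lam_inv (Lam t + s)"
  using Lam_le_iff[of t "Lam_inv (Lam t + s)"] Lam_inv(1) Lam_Lam_inv Lam_nonneg[of t] by simp

lemma Lam_inv_shift_le:
  "0 \<le> t \<Longrightarrow> 0 \<le> s \<Longrightarrow> s \<le> Lam (t + c) - Lam t \<Longrightarrow> 0 \<le> c \<Longrightarrow> Lam_inv (Lam t + s) \<le> t + c"
  using Lam_inv_le_iff[of "t + c" "Lam t + s"] Lam_nonneg[of t] by simp

lemma Lam_inv_le: "0 \<le> s \<Longrightarrow> p \<le> Lam s \<Longrightarrow> Lam_inv p \<le> s"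
  using Lam_le_iff[of "Lam_inv p" s] Lam_inv Lam_nonneg[of s] by auto

lemma continuous_on_Lam_comp [continuous_intros]: "continuous_on S f \<Longrightarrow> continuous_on S (\<lambda>x. Lam (f x))"
  using continuous_on_compose2[OF continuous_on_Lam] by blast

end

context bounded_intensity
begin

section \<open>Truncated makespans and the renewal equation\<close>

text \<open>Time change: a disruption set in the sense of \<open>disruptions\<close> is described, from time \<open>t\<close> on,
  by the \<open>Lam\<close>-level \<open>p\<close> of the next disruption and the level gaps \<open>\<omega>\<close> between the
  following ones. \<open>trunc_makespan N cs t p \<omega>\<close> is the time needed from \<open>t\<close> to process \<open>cs\<close> if at
  most \<open>N\<close> restarts occur, and \<open>0\<close> otherwise.\<close>
fun trunc_makespan :: "nat \<Rightarrow> real list \<Rightarrow> real \<Rightarrow> real \<Rightarrow> (nat \<Rightarrow> real) \<Rightarrow> ennreal" where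
  "trunc_makespan N [] t p \<omega> = 0"
| "trunc_makespan N (c # cs) t p \<omega> =
    (if Lam (t + c) \<le> p then ennreal c + trunc_makespan N cs (t + c) p \<omega>
     else case N of
       0 \<Rightarrow> 0
     | Suc M \<Rightarrow> ennreal (Lam_inv p - t) + trunc_makespan M (c # cs) (Lam_inv p) (p + \<omega> 0) (\<lambda>i. \<omega> (Suc i)))"

lemma trunc_makespan_complete:
  "Lam (t + c) \<le> p \<Longrightarrow> trunc_makespan N (c # cs) t p \<omega> = ennreal c + trunc_makespan N cs (t + c) p \<omega>"
  by simp

lemma trunc_makespan_restart:
  "p < Lam (t + c) \<Longrightarrow> trunc_makespan (Suc M) (c # cs) t p \<omega>
    = ennreal (Lam_inv p - t) + trunc_makespan M (c # cs) (Lam_inv p) (p + \<omega> 0) (\<lambda>i. \<omega> (Suc i))"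
  by simp

lemma trunc_makespan_exhausted: "p < Lam (t + c) \<Longrightarrow> trunc_makespan 0 (c # cs) t p \<omega> = 0"
  by simp

declare trunc_makespan.simps(2) [simp del]

lemma trunc_makespan_Suc_mono: "trunc_makespan N cs t p \<omega> \<le> trunc_makespan (Suc N) cs t p \<omega>"
proof (induction N cs arbitrary: t p \<omega> rule: restart_list_induct)
  case (Cons N c cs)
  show ?case
  proof (cases "Lam (t + c) \<le> p")
    case False
    then show ?thesis
      using Cons.IH(2) by (cases N) (simp_all add: trunc_makespan_exhausted trunc_makespan_restart add_left_mono)
  qed (simp add: Cons.IH(1) trunc_makespan_complete add_left_mono)
qed simp

lemma incseq_trunc_makespan: "incseq (\<lambda>N. trunc_makespan N cs t p \<omega>)"
  by (rule incseq_SucI) (rule trunc_makespan_Suc_mono)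

abbreviation state_space :: "(real \<times> real \<times> (nat \<Rightarrow> real)) measure" where
  "state_space \<equiv> borel \<Otimes>\<^sub>M borel \<Otimes>\<^sub>M Exp_seq.S"

lemma measurable_trunc_makespan_state_space:
  "(\<lambda>x. trunc_makespan N cs (fst x) (fst (snd x)) (snd (snd x))) \<in> borel_measurable state_space"
proof (induction N cs rule: restart_list_induct)
  case (Cons N c cs)
  have step: "(\<lambda>x. (fst x + c, fst (snd x), snd (snd x))) \<in> measurable state_space state_space"
    by measurable
  have [measurable]: "(\<lambda>x. trunc_makespan N cs (fst x + c) (fst (snd x)) (snd (snd x))) \<in> borel_measurable state_space"
    using measurable_compose[OF step Cons.IH(1)] by simp
  have complete: "(\<lambda>x. ennreal c + trunc_makespan N cs (fst x + c) (fst (snd x)) (snd (snd x)))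
      \<in> borel_measurable state_space"
    by measurable
  have restart: "(\<lambda>x. case N of 0 \<Rightarrow> 0 | Suc M \<Rightarrow> ennreal (Lam_inv (fst (snd x)) - fst x) +
      trunc_makespan M (c # cs) (Lam_inv (fst (snd x))) (fst (snd x) + snd (snd x) 0) (\<lambda>i. snd (snd x) (Suc i)))
    \<in> borel_measurable state_space"
  proof (cases N)
    case (Suc M)
    have shift: "(\<lambda>x. (Lam_inv (fst (snd x)), fst (snd x) + snd (snd x) 0, \<lambda>i. snd (snd x) (Suc i)))
        \<in> measurable state_space state_space"
      by measurable
    have [measurable]: "(\<lambda>x. trunc_makespan M (c # cs) (Lam_inv (fst (snd x))) (fst (snd x) + snd (snd x) 0)
        (\<lambda>i. snd (snd x) (Suc i))) \<in> borel_measurable state_space"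
      using measurable_compose[OF shift Cons.IH(2)[OF Suc]] by simp
    show ?thesis
      unfolding Suc nat.case by measurable
  qed simp
  have "{x \<in> space state_space. Lam (fst x + c) \<le> fst (snd x)} \<in> sets state_space"
    by measurable
  from measurable_If[OF complete restart this] show ?case
    unfolding trunc_makespan.simps(2)[of N c cs] by simp
qed simp

lemma measurable_trunc_makespan [measurable]:
  assumes [measurable]: "f \<in> borel_measurable M" "g \<in> borel_measurable M" "h \<in> measurable M Exp_seq.S"
  shows "(\<lambda>x. trunc_makespan N cs (f x) (g x) (h x)) \<in> borel_measurable M"
  using measurable_compose[OF _ measurable_trunc_makespan_state_space, of "\<lambda>x. (f x, g x, h x)"] by simp

definition trunc_exp_at_level :: "nat \<Rightarrow> real list \<Rightarrow> real \<Rightarrow> real \<Rightarrow> ennreal" where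
  "trunc_exp_at_level N cs t p = (\<integral>\<^sup>+ \<omega>. trunc_makespan N cs t p \<omega> \<partial>Exp_seq.S)"

definition trunc_exp :: "nat \<Rightarrow> real list \<Rightarrow> real \<Rightarrow> ennreal" where
  "trunc_exp N cs t = (\<integral>\<^sup>+ \<omega>. trunc_makespan N cs t (Lam t + \<omega> 0) (\<lambda>i. \<omega> (Suc i)) \<partial>Exp_seq.S)"

lemma borel_measurable_trunc_exp_at_level [measurable]:
  "(\<lambda>p. trunc_exp_at_level N cs t p) \<in> borel_measurable borel"
  unfolding trunc_exp_at_level_def by (rule Exp_seq.borel_measurable_nn_integral) (simp add: case_prod_beta)

lemma borel_measurable_trunc_exp [measurable]: "(\<lambda>t. trunc_exp N cs t) \<in> borel_measurable borel"
  unfolding trunc_exp_def by (rule Exp_seq.borel_measurable_nn_integral) (simp add: case_prod_beta)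

lemma trunc_exp_eq_level_integral:
  "trunc_exp N cs t = (\<integral>\<^sup>+ s. ennreal (exponential_density 1 s) * trunc_exp_at_level N cs t (Lam t + s) \<partial>lborel)"
proof -
  have "trunc_exp N cs t
      = (\<integral>\<^sup>+ \<omega>. trunc_makespan N cs t (Lam t + \<omega> 0) (\<lambda>i. \<omega> (Suc i))
          \<partial>distr (Exp1 \<Otimes>\<^sub>M Exp_seq.S) Exp_seq.S (\<lambda>(s, \<omega>). case_nat s \<omega>))"
    unfolding trunc_exp_def Exp_seq.PiM_iter ..
  also have "\<dots> = (\<integral>\<^sup>+ x. trunc_makespan N cs t (Lam t + fst x) (snd x) \<partial>(Exp1 \<Otimes>\<^sub>M Exp_seq.S))"
    by (subst nn_integral_distr) (auto simp: case_prod_beta)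
  also have "\<dots> = (\<integral>\<^sup>+ s. trunc_exp_at_level N cs t (Lam t + s) \<partial>Exp1)"
    by (subst Exp_seq.nn_integral_fst[symmetric]) (simp_all add: trunc_exp_at_level_def)
  also have "\<dots> = (\<integral>\<^sup>+ s. ennreal (exponential_density 1 s) * trunc_exp_at_level N cs t (Lam t + s) \<partial>lborel)"
    by (rule nn_integral_density) auto
  finally show ?thesis .
qed

lemma trunc_exp_at_level_complete:
  assumes "Lam (t + c) \<le> p"
  shows "trunc_exp_at_level N (c # cs) t p = ennreal c + trunc_exp_at_level N cs (t + c) p"
proof -
  have "trunc_exp_at_level N (c # cs) t p = (\<integral>\<^sup>+ \<omega>. ennreal c + trunc_makespan N cs (t + c) p \<omega> \<partial>Exp_seq.S)"
    unfolding trunc_exp_at_level_def using assms by (intro nn_integral_cong) (simp add: trunc_makespan_complete)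
  also have "\<dots> = ennreal c + trunc_exp_at_level N cs (t + c) p"
    by (simp add: nn_integral_add trunc_exp_at_level_def Exp_seq.emeasure_space_1)
  finally show ?thesis .
qed

lemma trunc_exp_at_level_restart:
  assumes "p < Lam (t + c)" "0 \<le> p"
  shows "trunc_exp_at_level (Suc M) (c # cs) t p = ennreal (Lam_inv p - t) + trunc_exp M (c # cs) (Lam_inv p)"
proof -
  have "trunc_exp_at_level (Suc M) (c # cs) t p = (\<integral>\<^sup>+ \<omega>. ennreal (Lam_inv p - t) +
      trunc_makespan M (c # cs) (Lam_inv p) (p + \<omega> 0) (\<lambda>i. \<omega> (Suc i)) \<partial>Exp_seq.S)"
    unfolding trunc_exp_at_level_def using assms by (intro nn_integral_cong) (simp add: trunc_makespan_restart)
  also have "\<dots> = ennreal (Lam_inv p - t) + trunc_exp M (c # cs) (Lam_inv p)"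
    using assms by (simp add: nn_integral_add trunc_exp_def Lam_Lam_inv Exp_seq.emeasure_space_1)
  finally show ?thesis .
qed

lemma trunc_exp_at_level_exhausted: "p < Lam (t + c) \<Longrightarrow> trunc_exp_at_level 0 (c # cs) t p = 0"
  by (simp add: trunc_exp_at_level_def trunc_makespan_exhausted)

lemma trunc_exp_at_level_Cons:
  assumes "0 \<le> t" "0 \<le> s"
  shows "trunc_exp_at_level N (c # cs) t (Lam t + s) =
    (if s < Lam (t + c) - Lam t then
       (case N of 0 \<Rightarrow> 0 | Suc M \<Rightarrow> ennreal (Lam_inv (Lam t + s) - t) + trunc_exp M (c # cs) (Lam_inv (Lam t + s)))
     else ennreal c + trunc_exp_at_level N cs (t + c) (Lam t + s))"
  using Lam_nonneg[of t] assms
  by (cases N) (auto simp: trunc_exp_at_level_exhausted trunc_exp_at_level_restart trunc_exp_at_level_complete)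

lemma trunc_exp_Nil [simp]: "trunc_exp N [] t = 0"
  by (simp add: trunc_exp_def)

text \<open>The renewal equation: either the first disruption falls at level offset \<open>s < Lam (t + c) - Lam t\<close>
  and the task restarts at \<open>Lam_inv (Lam t + s)\<close>, or the task completes and, by memorylessness,
  the rest of the schedule starts afresh at \<open>t + c\<close>.\<close>
lemma trunc_exp_Cons:
  assumes "0 \<le> t" "0 \<le> c"
  shows "trunc_exp N (c # cs) t
    = (\<integral>\<^sup>+ s. indicator {0..<Lam (t + c) - Lam t} s * ennreal (exp (- s)) *
        (case N of 0 \<Rightarrow> 0 | Suc M \<Rightarrow> ennreal (Lam_inv (Lam t + s) - t) + trunc_exp M (c # cs) (Lam_inv (Lam t + s))) \<partial>lborel)
      + ennreal (exp (- (Lam (t + c) - Lam t))) * (ennreal c + trunc_exp N cs (t + c))"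
proof -
  define d where "d = Lam (t + c) - Lam t"
  have "0 \<le> d" unfolding d_def using Lam_increment_bounds(1)[of t "t + c"] assms by simp
  define R where "R s = (case N of 0 \<Rightarrow> 0 | Suc M \<Rightarrow>
    ennreal (Lam_inv (Lam t + s) - t) + trunc_exp M (c # cs) (Lam_inv (Lam t + s)))" for s
  have [measurable]: "R \<in> borel_measurable borel"
    unfolding R_def by (cases N) simp_all
  have split: "ennreal (exponential_density 1 s) * trunc_exp_at_level N (c # cs) t (Lam t + s)
      = indicator {0..<d} s * ennreal (exp (- s)) * R s
        + indicator {d..} s * ennreal (exponential_density 1 s) * (ennreal c + trunc_exp_at_level N cs (t + c) (Lam t + s))" for s
    using trunc_exp_at_level_Cons[OF assms(1), of s N c cs] \<open>0 \<le> d\<close>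
    by (cases "0 \<le> s") (auto simp: R_def d_def exponential_density_def indicator_def)
  have "trunc_exp N (c # cs) t = (\<integral>\<^sup>+ s. indicator {0..<d} s * ennreal (exp (- s)) * R s \<partial>lborel)
      + (\<integral>\<^sup>+ s. indicator {d..} s * ennreal (exponential_density 1 s) *
           (ennreal c + trunc_exp_at_level N cs (t + c) (Lam t + s)) \<partial>lborel)"
    unfolding trunc_exp_eq_level_integral split by (rule nn_integral_add) auto
  also have "(\<integral>\<^sup>+ s. indicator {d..} s * ennreal (exponential_density 1 s) *
      (ennreal c + trunc_exp_at_level N cs (t + c) (Lam t + s)) \<partial>lborel)
    = ennreal (exp (- d)) * (\<integral>\<^sup>+ x. ennreal (exponential_density 1 x) *
      (ennreal c + trunc_exp_at_level N cs (t + c) (Lam (t + c) + x)) \<partial>lborel)"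
    using nn_integral_exponential_memoryless[of "\<lambda>s. ennreal c + trunc_exp_at_level N cs (t + c) (Lam t + s)" d 1] \<open>0 \<le> d\<close>
    by (simp add: d_def add.assoc)
  also have "\<dots> = ennreal (exp (- d)) * (ennreal c + trunc_exp N cs (t + c))"
    by (subst nn_integral_Exp1_const_add) (simp_all add: trunc_exp_eq_level_integral)
  finally show ?thesis unfolding d_def R_def .
qed

text \<open>Each of the at most \<open>N\<close> restarts wastes less than the length of the interrupted task.\<close>
lemma trunc_makespan_le:
  assumes "0 \<le> t" "\<forall>c\<in>set cs. 0 \<le> c"
  shows "trunc_makespan N cs t p \<omega> \<le> ennreal (real (Suc N) * sum_list cs)"
  using assms
proof (induction N cs arbitrary: t p \<omega> rule: restart_list_induct)
  case (Cons N c cs)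
  have "0 \<le> c" "0 \<le> sum_list cs"
    using Cons.prems by (auto intro: sum_list_nonneg)
  show ?case
  proof (cases "Lam (t + c) \<le> p")
    case True
    then have "trunc_makespan N (c # cs) t p \<omega> \<le> ennreal c + ennreal (real (Suc N) * sum_list cs)"
      using Cons.IH(1)[of "t + c"] Cons.prems \<open>0 \<le> c\<close> by (simp add: trunc_makespan_complete add_left_mono)
    also have "\<dots> \<le> ennreal (real (Suc N) * sum_list (c # cs))"
      using \<open>0 \<le> c\<close> \<open>0 \<le> sum_list cs\<close>
      by (simp add: ennreal_plus[symmetric] del: ennreal_plus) (simp add: algebra_simps)
    finally show ?thesis .
  next
    case False
    show ?thesis
    proof (cases N)
      case (Suc M)
      have "Lam_inv p - t \<le> c"
        using False Cons.prems \<open>0 \<le> c\<close> Lam_inv_le[of "t + c" p] by simp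
      then have "trunc_makespan N (c # cs) t p \<omega> \<le> ennreal c + ennreal (real (Suc M) * sum_list (c # cs))"
        using Cons.IH(2)[OF Suc, of "Lam_inv p"] Cons.prems False Suc Lam_inv(1)
        by (auto simp: trunc_makespan_restart intro!: add_mono ennreal_leI)
      also have "\<dots> \<le> ennreal (real (Suc N) * sum_list (c # cs))"
        using \<open>0 \<le> c\<close> \<open>0 \<le> sum_list cs\<close> Suc
        by (simp add: ennreal_plus[symmetric] del: ennreal_plus) (simp add: algebra_simps)
      finally show ?thesis .
    qed (use False in \<open>simp add: trunc_makespan_exhausted\<close>)
  qed
qed simp

lemma trunc_exp_le:
  assumes "0 \<le> t" "\<forall>c\<in>set cs. 0 \<le> c"
  shows "trunc_exp N cs t \<le> ennreal (real (Suc N) * sum_list cs)"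
proof -
  have "trunc_exp N cs t \<le> (\<integral>\<^sup>+ \<omega>. ennreal (real (Suc N) * sum_list cs) \<partial>Exp_seq.S)"
    unfolding trunc_exp_def
    by (rule nn_integral_mono) (use assms trunc_makespan_le in blast)
  then show ?thesis
    by (simp add: Exp_seq.emeasure_space_1)
qed

definition trunc_exp_real :: "nat \<Rightarrow> real list \<Rightarrow> real \<Rightarrow> real" where
  "trunc_exp_real N cs t = enn2real (trunc_exp N cs t)"

lemma borel_measurable_trunc_exp_real [measurable]: "trunc_exp_real N cs \<in> borel_measurable borel"
  unfolding trunc_exp_real_def by measurable

lemma trunc_exp_real:
  assumes "0 \<le> t" "\<forall>c\<in>set cs. 0 \<le> c"
  shows "trunc_exp N cs t = ennreal (trunc_exp_real N cs t)"
    and "0 \<le> trunc_exp_real N cs t" "trunc_exp_real N cs t \<le> real (Suc N) * sum_list cs"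
proof -
  have le: "trunc_exp N cs t \<le> ennreal (real (Suc N) * sum_list cs)"
    using trunc_exp_le[OF assms] .
  then have "trunc_exp N cs t < \<top>"
    using ennreal_less_top le_less_trans by blast
  then show "trunc_exp N cs t = ennreal (trunc_exp_real N cs t)"
    unfolding trunc_exp_real_def by (rule ennreal_enn2real[symmetric])
  show "0 \<le> trunc_exp_real N cs t"
    by (simp add: trunc_exp_real_def)
  have "0 \<le> real (Suc N) * sum_list cs"
    using assms(2) sum_list_nonneg[of cs] by simp
  then show "trunc_exp_real N cs t \<le> real (Suc N) * sum_list cs"
    using enn2real_mono[OF le] unfolding trunc_exp_real_def by simp
qed

lemma trunc_exp_real_Nil [simp]: "trunc_exp_real N [] t = 0"
  by (simp add: trunc_exp_real_def)

lemma trunc_exp_real_Cons_0: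
  assumes "0 \<le> t" "\<forall>c\<in>set (c # cs). 0 \<le> c"
  shows "trunc_exp_real 0 (c # cs) t = exp (- (Lam (t + c) - Lam t)) * (c + trunc_exp_real 0 cs (t + c))"
proof -
  have "ennreal (trunc_exp_real 0 (c # cs) t)
      = ennreal (exp (- (Lam (t + c) - Lam t))) * (ennreal c + ennreal (trunc_exp_real 0 cs (t + c)))"
    using trunc_exp_Cons[of t c 0 cs] trunc_exp_real(1)[where N=0 and cs="c # cs"] trunc_exp_real(1)[where N=0 and t="t + c" and cs=cs] assms
    by simp
  also have "\<dots> = ennreal (exp (- (Lam (t + c) - Lam t)) * (c + trunc_exp_real 0 cs (t + c)))"
    using assms trunc_exp_real(2)[where N=0 and t="t + c" and cs=cs] by (simp add: ennreal_mult)
  finally show ?thesis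
    using assms trunc_exp_real(2)[where N=0 and t="t + c" and cs=cs] trunc_exp_real(2)[where N=0 and cs="c # cs"]
    by (subst (asm) ennreal_inj) auto
qed

text \<open>Expected cost of a task of length \<open>c\<close> started at \<open>t\<close> on the event that it is hit by a
  disruption, when \<open>g \<sigma>\<close> is the expected remaining time after a restart at \<open>\<sigma>\<close>.\<close>
definition restart_integral :: "(real \<Rightarrow> real) \<Rightarrow> real \<Rightarrow> real \<Rightarrow> real" where
  "restart_integral g c t = (\<integral>s. exp (- s) * (Lam_inv (Lam t + s) - t + g (Lam_inv (Lam t + s)))
     * indicator {0..Lam (t + c) - Lam t} s \<partial>lborel)"

lemma integrable_restart_integrand:
  assumes "0 \<le> t" "0 \<le> c" and [measurable]: "g \<in> borel_measurable borel"
    and "\<And>\<sigma>. t \<le> \<sigma> \<Longrightarrow> \<sigma> \<le> t + c \<Longrightarrow> \<bar>g \<sigma>\<bar> \<le> G"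
  shows "integrable lborel (\<lambda>s. exp (- s) * (Lam_inv (Lam t + s) - t + g (Lam_inv (Lam t + s)))
    * indicator {0..Lam (t + c) - Lam t} s)"
proof (rule integrable_bounded_times_indicator_Icc[where B="c + G"])
  fix s assume "s \<in> {0..Lam (t + c) - Lam t}"
  then have "t \<le> Lam_inv (Lam t + s)" "Lam_inv (Lam t + s) \<le> t + c" "exp (- s) \<le> 1"
    using assms Lam_inv_shift_ge Lam_inv_shift_le by auto
  then have "\<bar>Lam_inv (Lam t + s) - t + g (Lam_inv (Lam t + s))\<bar> \<le> c + G"
    using assms(4)[of "Lam_inv (Lam t + s)"] by linarith
  moreover have "\<bar>exp (- s) * (Lam_inv (Lam t + s) - t + g (Lam_inv (Lam t + s)))\<bar>
      \<le> \<bar>Lam_inv (Lam t + s) - t + g (Lam_inv (Lam t + s))\<bar>"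
    unfolding abs_mult using \<open>exp (- s) \<le> 1\<close> by (intro mult_left_le_one_le) auto
  ultimately show "\<bar>exp (- s) * (Lam_inv (Lam t + s) - t + g (Lam_inv (Lam t + s)))\<bar> \<le> c + G"
    by linarith
next
  show "(\<lambda>s. exp (- s) * (Lam_inv (Lam t + s) - t + g (Lam_inv (Lam t + s)))) \<in> borel_measurable borel"
    by measurable
qed

lemma nn_integral_restart_branch:
  assumes "0 \<le> t" "\<forall>x\<in>set (c # cs). 0 \<le> x"
  shows "(\<integral>\<^sup>+ s. indicator {0..<Lam (t + c) - Lam t} s * ennreal (exp (- s)) *
      (ennreal (Lam_inv (Lam t + s) - t) + trunc_exp M (c # cs) (Lam_inv (Lam t + s))) \<partial>lborel)
    = ennreal (restart_integral (trunc_exp_real M (c # cs)) c t)"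
    and "0 \<le> restart_integral (trunc_exp_real M (c # cs)) c t"
proof -
  define d where "d = Lam (t + c) - Lam t"
  define v where "v = trunc_exp_real M (c # cs)"
  define h where "h s = exp (- s) * (Lam_inv (Lam t + s) - t + v (Lam_inv (Lam t + s))) * indicator {0..d} s" for s
  have v: "trunc_exp M (c # cs) \<sigma> = ennreal (v \<sigma>)" "0 \<le> v \<sigma>" "v \<sigma> \<le> real (Suc M) * sum_list (c # cs)"
    if "0 \<le> \<sigma>" for \<sigma>
    unfolding v_def using trunc_exp_real[OF that assms(2)] by auto
  have "integrable lborel h"
    unfolding h_def d_def v_def using assms v(2,3)
    by (intro integrable_restart_integrand[where G="real (Suc M) * sum_list (c # cs)"]) (auto simp: v_def)
  moreover have h_nonneg: "0 \<le> h s" for s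
    using Lam_inv_shift_ge[OF assms(1)] v(2)[OF Lam_inv(1)] by (auto simp: h_def indicator_def)
  ultimately have "(\<integral>\<^sup>+ s. ennreal (h s) \<partial>lborel) = ennreal (\<integral>s. h s \<partial>lborel)"
    by (intro nn_integral_eq_integral) auto
  moreover have "(\<integral>\<^sup>+ s. indicator {0..<d} s * ennreal (exp (- s)) *
      (ennreal (Lam_inv (Lam t + s) - t) + trunc_exp M (c # cs) (Lam_inv (Lam t + s))) \<partial>lborel)
    = (\<integral>\<^sup>+ s. ennreal (h s) \<partial>lborel)"
  proof (rule nn_integral_cong_AE)
    show "AE s in lborel. indicator {0..<d} s * ennreal (exp (- s)) *
        (ennreal (Lam_inv (Lam t + s) - t) + trunc_exp M (c # cs) (Lam_inv (Lam t + s))) = ennreal (h s)"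
      using AE_lborel_singleton[of d]
    proof eventually_elim
      case (elim s)
      show ?case
      proof (cases "0 \<le> s \<and> s < d")
        case True
        then show ?thesis
          using Lam_inv_shift_ge[OF assms(1), of s] v[OF Lam_inv(1), of "Lam t + s"]
          by (simp add: h_def ennreal_mult ennreal_plus[symmetric] del: ennreal_plus)
      qed (use elim in \<open>auto simp: h_def\<close>)
    qed
  qed
  moreover have "restart_integral v c t = (\<integral>s. h s \<partial>lborel)"
    by (simp add: restart_integral_def h_def d_def)
  ultimately show "(\<integral>\<^sup>+ s. indicator {0..<Lam (t + c) - Lam t} s * ennreal (exp (- s)) *
      (ennreal (Lam_inv (Lam t + s) - t) + trunc_exp M (c # cs) (Lam_inv (Lam t + s))) \<partial>lborel)
    = ennreal (restart_integral (trunc_exp_real M (c # cs)) c t)"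
    and "0 \<le> restart_integral (trunc_exp_real M (c # cs)) c t"
    using h_nonneg by (simp_all add: d_def v_def integral_nonneg)
qed

lemma trunc_exp_real_Cons_Suc:
  assumes "0 \<le> t" "\<forall>x\<in>set (c # cs). 0 \<le> x"
  shows "trunc_exp_real (Suc M) (c # cs) t = restart_integral (trunc_exp_real M (c # cs)) c t
    + exp (- (Lam (t + c) - Lam t)) * (c + trunc_exp_real (Suc M) cs (t + c))"
proof -
  have "0 \<le> trunc_exp_real (Suc M) cs (t + c)" "0 \<le> trunc_exp_real (Suc M) (c # cs) t"
    using assms trunc_exp_real(2) by auto
  moreover have "ennreal (trunc_exp_real (Suc M) (c # cs) t)
      = ennreal (restart_integral (trunc_exp_real M (c # cs)) c t)
        + ennreal (exp (- (Lam (t + c) - Lam t))) * (ennreal c + ennreal (trunc_exp_real (Suc M) cs (t + c)))"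
    using trunc_exp_Cons[of t c "Suc M" cs] nn_integral_restart_branch(1)[OF assms]
      trunc_exp_real(1)[where N="Suc M" and cs="c # cs"] trunc_exp_real(1)[where N="Suc M" and t="t + c" and cs=cs] assms
    by simp
  ultimately show ?thesis
    using assms nn_integral_restart_branch(2)[OF assms]
    by (simp add: ennreal_mult'[symmetric] ennreal_plus[symmetric] del: ennreal_plus)
qed

section \<open>The first-order makespan\<close>

text \<open>To first order in the intensity, a disruption at \<open>t + u\<close> (rate \<open>lam (t + u)\<close>) costs \<open>u\<close>;
  integrating by parts, \<open>\<integral>\<^sub>0\<^sup>c u lam (t + u) du\<close> becomes the formula below.\<close>
definition restart_loss :: "real \<Rightarrow> real \<Rightarrow> real" where
  "restart_loss c t = integral {0..c} (\<lambda>u. Lam (t + c) - Lam (t + u))"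

lemma integrable_restart_loss: "(\<lambda>u. Lam (t + c) - Lam (t + u)) integrable_on {0..c}"
  by (intro integrable_continuous_interval continuous_intros)

lemma restart_loss_has_integral:
  "((\<lambda>u. Lam (t + c) - Lam (t + u)) has_integral restart_loss c t) {0..c}"
  unfolding restart_loss_def using integrable_restart_loss by (rule integrable_integral)

lemma restart_loss_nonneg: "0 \<le> restart_loss c t"
  unfolding restart_loss_def
  by (rule integral_nonneg[OF integrable_restart_loss]) (use Lam_increment_bounds(1) in auto)

lemma restart_loss_le: "0 \<le> c \<Longrightarrow> restart_loss c t \<le> lM * c\<^sup>2 / 2"
  using has_integral_le[OF restart_loss_has_integral has_integral_linear_decay]
    Lam_increment_bounds(2)[of "t + _" "t + c"] by force

lemma restart_loss_lipschitz:
  assumes "0 \<le> c"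
  shows "\<bar>restart_loss c x - restart_loss c y\<bar> \<le> lM * c * \<bar>x - y\<bar>"
proof -
  let ?g = "\<lambda>u. (Lam (x + c) - Lam (x + u)) - (Lam (y + c) - Lam (y + u))"
  have bound: "\<bar>?g u\<bar> \<le> lM * \<bar>x - y\<bar>" for u
    using Lam_increment_bounds[of "x + c" "y + c"] Lam_increment_bounds[of "x + u" "y + u"]
      Lam_increment_bounds[of "y + c" "x + c"] Lam_increment_bounds[of "y + u" "x + u"]
    by (cases "x \<le> y") (auto simp: abs_if)
  have "restart_loss c x - restart_loss c y = integral {0..c} ?g"
    unfolding restart_loss_def by (rule integral_diff[symmetric]) (rule integrable_restart_loss)+
  also have "norm \<dots> \<le> lM * \<bar>x - y\<bar> * (c - 0)"
    by (rule integral_bound) (use assms bound in \<open>auto intro!: continuous_intros\<close>)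
  finally show ?thesis by (simp add: mult.assoc mult.commute)
qed

lemma restart_loss_eq: "0 \<le> c \<Longrightarrow> restart_loss c t = c * Lam (t + c) - integral {t..t + c} Lam"
proof -
  assume "0 \<le> c"
  have "restart_loss c t = integral {0..c} (\<lambda>u. Lam (t + c)) - integral {0..c} (\<lambda>u. Lam (t + u))"
    unfolding restart_loss_def
    by (rule integral_diff) (auto intro!: integrable_continuous_interval continuous_intros)
  also have "integral {0..c} (\<lambda>u. Lam (t + u)) = integral {t..t + c} Lam"
    using integral_shift_Icc_real[of 0 c Lam t] by (simp add: comp_def add.commute)
  finally show ?thesis using \<open>0 \<le> c\<close> by simp
qed

fun approx_makespan :: "real list \<Rightarrow> real \<Rightarrow> real" where
  "approx_makespan [] t = 0"
| "approx_makespan (c # cs) t = c + restart_loss c t + approx_makespan cs (t + c)"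

lemma approx_makespan_lipschitz:
  "\<forall>c\<in>set cs. 0 \<le> c \<Longrightarrow> \<bar>approx_makespan cs x - approx_makespan cs y\<bar> \<le> lM * sum_list cs * \<bar>x - y\<bar>"
proof (induction cs arbitrary: x y)
  case (Cons c cs)
  have "\<bar>approx_makespan (c # cs) x - approx_makespan (c # cs) y\<bar>
      \<le> \<bar>restart_loss c x - restart_loss c y\<bar> + \<bar>approx_makespan cs (x + c) - approx_makespan cs (y + c)\<bar>"
    by simp
  also have "\<dots> \<le> lM * c * \<bar>x - y\<bar> + lM * sum_list cs * \<bar>x - y\<bar>"
    using restart_loss_lipschitz[of c x y] Cons.IH[of "x + c" "y + c"] Cons.prems by (intro add_mono) auto
  finally show ?case by (simp add: algebra_simps)
qed simp

lemma approx_makespan_nonneg: "\<forall>c\<in>set cs. 0 \<le> c \<Longrightarrow> 0 \<le> approx_makespan cs t"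
  by (induction cs arbitrary: t) (auto intro: add_nonneg_nonneg restart_loss_nonneg)

lemma approx_makespan_le:
  "\<forall>c\<in>set cs. 0 \<le> c \<Longrightarrow> approx_makespan cs t \<le> sum_list cs + lM * (\<Sum>c\<leftarrow>cs. c\<^sup>2) / 2"
proof (induction cs arbitrary: t)
  case (Cons c cs)
  have "approx_makespan cs (t + c) \<le> sum_list cs + lM * (\<Sum>c\<leftarrow>cs. c\<^sup>2) / 2"
    using Cons by simp
  then show ?case
    using restart_loss_le[of c t] Cons.prems by (simp add: field_simps)
qed simp

fun completion_weighted_Lam :: "real list \<Rightarrow> real \<Rightarrow> real" where
  "completion_weighted_Lam [] t = 0"
| "completion_weighted_Lam (c # cs) t = c * Lam (t + c) + completion_weighted_Lam cs (t + c)"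

lemma approx_makespan_eq:
  "\<forall>c\<in>set cs. 0 \<le> c \<Longrightarrow>
    approx_makespan cs t = sum_list cs + completion_weighted_Lam cs t - integral {t..t + sum_list cs} Lam"
proof (induction cs arbitrary: t)
  case (Cons c cs)
  have "0 \<le> c" "0 \<le> sum_list cs"
    using Cons.prems by (auto intro: sum_list_nonneg)
  then have "integral {t..t + c} Lam + integral {t + c..t + c + sum_list cs} Lam = integral {t..t + (c + sum_list cs)} Lam"
    using Henstock_Kurzweil_Integration.integral_combine[of t "t + c" "t + (c + sum_list cs)" Lam]
    by (simp add: add.assoc integrable_continuous_interval continuous_on_subset[OF continuous_on_Lam])
  then show ?case
    using Cons.IH[of "t + c"] Cons.prems restart_loss_eq[OF \<open>0 \<le> c\<close>, of t] by simp
qed simp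

lemma completion_weighted_Lam_upt:
  "completion_weighted_Lam (map g [1..<n + 1]) 0 = (\<Sum>i=1..n. g i * Lam (\<Sum>k=1..i. g k))"
proof (induction n)
  case (Suc n)
  have snoc: "completion_weighted_Lam (xs @ [c]) t = completion_weighted_Lam xs t + c * Lam (t + sum_list xs + c)"
    for xs c t by (induction xs arbitrary: t) (auto simp: algebra_simps)
  have "sum_list (map g [1..<n + 1]) = (\<Sum>k=1..n. g k)"
    by (induction n) auto
  then show ?case
    using Suc snoc[of "map g [1..<n + 1]" "g (Suc n)" 0] by simp
qed simp

text \<open>Layer-cake formula: the restart time \<open>Lam_inv (Lam t + s)\<close> caused by a disruption at level
  offset \<open>s\<close>, integrated over the offsets at which the task is hit, is \<open>restart_loss c t\<close>.\<close>
lemma nn_integral_restart_delay: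
  assumes "0 \<le> t" "0 \<le> c"
  shows "(\<integral>\<^sup>+ s. ennreal ((Lam_inv (Lam t + s) - t) * indicator {0..Lam (t + c) - Lam t} s) \<partial>lborel)
    = ennreal (restart_loss c t)"
proof -
  define d where "d = Lam (t + c) - Lam t"
  define F :: "real \<times> real \<Rightarrow> ennreal" where
    "F x = indicator {(s, u). 0 \<le> s \<and> s \<le> d \<and> 0 \<le> u \<and> u \<le> c \<and> Lam (t + u) < Lam t + s} x" for x
  have [measurable]: "F \<in> borel_measurable (lborel \<Otimes>\<^sub>M lborel)"
    unfolding F_def by measurable
  have u_section: "(\<integral>\<^sup>+ u. F (s, u) \<partial>lborel) = ennreal ((Lam_inv (Lam t + s) - t) * indicator {0..d} s)" for s
  proof (cases "0 \<le> s \<and> s \<le> d")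
    case True
    define \<sigma> where "\<sigma> = Lam_inv (Lam t + s)"
    have "t \<le> \<sigma>" "\<sigma> \<le> t + c" "0 \<le> \<sigma>"
      using True assms Lam_inv_shift_ge Lam_inv_shift_le Lam_inv(1) unfolding \<sigma>_def d_def by auto
    moreover have "Lam \<sigma> = Lam t + s"
      unfolding \<sigma>_def using Lam_Lam_inv Lam_nonneg[of t] True by simp
    ultimately have "F (s, u) = indicator {0..<\<sigma> - t} u" for u
      using True Lam_less_iff[of "t + u" \<sigma>] assms by (auto simp: F_def indicator_def)
    then show ?thesis
      using True \<open>t \<le> \<sigma>\<close> by (simp add: \<sigma>_def)
  qed (auto simp: F_def indicator_def)
  have s_section: "(\<integral>\<^sup>+ s. F (s, u) \<partial>lborel) = ennreal (Lam (t + c) - Lam (t + u)) * indicator {0..c} u" for u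
  proof (cases "0 \<le> u \<and> u \<le> c")
    case True
    then have "F (s, u) = indicator {Lam (t + u) - Lam t<..d} s" for s
      using Lam_increment_bounds(1)[of t "t + u"] by (auto simp: F_def indicator_def)
    then show ?thesis
      using True Lam_increment_bounds(1)[of "t + u" "t + c"] by (simp add: d_def)
  qed (auto simp: F_def indicator_def)
  have "(\<integral>\<^sup>+ s. ennreal ((Lam_inv (Lam t + s) - t) * indicator {0..d} s) \<partial>lborel)
      = (\<integral>\<^sup>+ s. \<integral>\<^sup>+ u. F (s, u) \<partial>lborel \<partial>lborel)"
    by (simp add: u_section)
  also have "\<dots> = (\<integral>\<^sup>+ u. \<integral>\<^sup>+ s. F (s, u) \<partial>lborel \<partial>lborel)"
    by (rule lborel_pair.Fubini[symmetric]) simp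
  also have "\<dots> = ennreal (restart_loss c t)"
    unfolding s_section
    by (rule nn_integral_has_integral_lebesgue'[OF _ restart_loss_has_integral])
      (use Lam_increment_bounds(1) in auto)
  finally show ?thesis unfolding d_def .
qed

lemma restart_delay_has_integral:
  assumes "0 \<le> t" "0 \<le> c"
  shows "has_bochner_integral lborel
    (\<lambda>s. (Lam_inv (Lam t + s) - t) * indicator {0..Lam (t + c) - Lam t} s) (restart_loss c t)"
  using assms Lam_inv_shift_ge[of t]
  by (intro has_bochner_integral_nn_integral nn_integral_restart_delay restart_loss_nonneg)
    (auto simp: indicator_def)

lemma restart_integral_le:
  assumes "0 \<le> t" "0 \<le> c" "0 \<le> K" and [measurable]: "g \<in> borel_measurable borel"
    and g: "\<And>\<sigma>. t \<le> \<sigma> \<Longrightarrow> \<sigma> \<le> t + c \<Longrightarrow> 0 \<le> g \<sigma> \<and> g \<sigma> \<le> B + K * (\<sigma> - t)"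
  shows "restart_integral g c t \<le> (1 + K) * restart_loss c t + B * (1 - exp (- (Lam (t + c) - Lam t)))"
proof -
  define d where "d = Lam (t + c) - Lam t"
  have "0 \<le> d" unfolding d_def using Lam_increment_bounds(1)[of t "t + c"] assms by simp
  have delay: "has_bochner_integral lborel (\<lambda>s. (Lam_inv (Lam t + s) - t) * indicator {0..d} s) (restart_loss c t)"
    unfolding d_def using restart_delay_has_integral assms by simp
  have "restart_integral g c t \<le> (\<integral>s. (1 + K) * ((Lam_inv (Lam t + s) - t) * indicator {0..d} s)
      + B * (exp (- s) * indicator {0..d} s) \<partial>lborel)"
    unfolding restart_integral_def d_def[symmetric]
  proof (rule integral_mono)
    show "integrable lborel (\<lambda>s. exp (- s) * (Lam_inv (Lam t + s) - t + g (Lam_inv (Lam t + s))) * indicator {0..d} s)"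
      unfolding d_def using assms g
      by (intro integrable_restart_integrand[where G="\<bar>B\<bar> + K * c"])
        (auto simp: abs_le_iff intro!: order_trans[OF _ add_mono[OF abs_ge_self mult_left_mono]])
    fix s
    show "exp (- s) * (Lam_inv (Lam t + s) - t + g (Lam_inv (Lam t + s))) * indicator {0..d} s
      \<le> (1 + K) * ((Lam_inv (Lam t + s) - t) * indicator {0..d} s) + B * (exp (- s) * indicator {0..d} s)"
    proof (cases "s \<in> {0..d}")
      case True
      define \<sigma> where "\<sigma> = Lam_inv (Lam t + s)"
      have "t \<le> \<sigma>" "\<sigma> \<le> t + c" "exp (- s) \<le> 1"
        using True assms Lam_inv_shift_ge Lam_inv_shift_le unfolding \<sigma>_def d_def by auto
      then have "exp (- s) * g \<sigma> \<le> exp (- s) * (B + K * (\<sigma> - t))"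
        using g[of \<sigma>] by (intro mult_left_mono) auto
      then have "exp (- s) * (\<sigma> - t + g \<sigma>) \<le> exp (- s) * (\<sigma> - t + K * (\<sigma> - t)) + B * exp (- s)"
        by (simp add: algebra_simps)
      also have "\<dots> = exp (- s) * ((1 + K) * (\<sigma> - t)) + B * exp (- s)"
        by (simp add: algebra_simps)
      also have "\<dots> \<le> (1 + K) * (\<sigma> - t) + B * exp (- s)"
        using \<open>t \<le> \<sigma>\<close> \<open>exp (- s) \<le> 1\<close> assms(3) by (simp add: mult_left_le_one_le)
      finally show ?thesis using True by (simp add: \<sigma>_def)
    qed simp
  qed (use delay exp_minus_has_integral[OF \<open>0 \<le> d\<close>] in \<open>auto simp: has_bochner_integral_iff\<close>)
  also have "\<dots> = (1 + K) * restart_loss c t + B * (1 - exp (- d))"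
    using delay exp_minus_has_integral[OF \<open>0 \<le> d\<close>] by (simp add: has_bochner_integral_iff)
  finally show ?thesis unfolding d_def .
qed

lemma restart_integral_ge:
  assumes "0 \<le> t" "0 \<le> c" "0 \<le> K" and [measurable]: "g \<in> borel_measurable borel"
    and g: "\<And>\<sigma>. t \<le> \<sigma> \<Longrightarrow> \<sigma> \<le> t + c \<Longrightarrow> 0 \<le> g \<sigma> \<and> g \<sigma> \<le> G \<and> B - K * (\<sigma> - t) \<le> g \<sigma>"
  shows "(1 - (Lam (t + c) - Lam t) - K) * restart_loss c t + B * (1 - exp (- (Lam (t + c) - Lam t)))
    \<le> restart_integral g c t"
proof -
  define d where "d = Lam (t + c) - Lam t"
  have "0 \<le> d" unfolding d_def using Lam_increment_bounds(1)[of t "t + c"] assms by simp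
  have delay: "has_bochner_integral lborel (\<lambda>s. (Lam_inv (Lam t + s) - t) * indicator {0..d} s) (restart_loss c t)"
    unfolding d_def using restart_delay_has_integral assms by simp
  have "(1 - d - K) * restart_loss c t + B * (1 - exp (- d))
      = (\<integral>s. (1 - d - K) * ((Lam_inv (Lam t + s) - t) * indicator {0..d} s)
          + B * (exp (- s) * indicator {0..d} s) \<partial>lborel)"
    using delay exp_minus_has_integral[OF \<open>0 \<le> d\<close>] by (simp add: has_bochner_integral_iff)
  also have "\<dots> \<le> restart_integral g c t"
    unfolding restart_integral_def d_def[symmetric]
  proof (rule integral_mono)
    show "integrable lborel (\<lambda>s. exp (- s) * (Lam_inv (Lam t + s) - t + g (Lam_inv (Lam t + s))) * indicator {0..d} s)"
      unfolding d_def using assms g by (intro integrable_restart_integrand[where G=G]) auto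
    fix s
    show "(1 - d - K) * ((Lam_inv (Lam t + s) - t) * indicator {0..d} s) + B * (exp (- s) * indicator {0..d} s)
      \<le> exp (- s) * (Lam_inv (Lam t + s) - t + g (Lam_inv (Lam t + s))) * indicator {0..d} s"
    proof (cases "s \<in> {0..d}")
      case True
      define \<sigma> where "\<sigma> = Lam_inv (Lam t + s)"
      have "t \<le> \<sigma>" "\<sigma> \<le> t + c" "exp (- s) \<le> 1" "1 - d \<le> exp (- s)"
        using True assms Lam_inv_shift_ge Lam_inv_shift_le exp_ge_add_one_self[of "- s"]
        unfolding \<sigma>_def d_def by auto
      have "(1 - d) * (\<sigma> - t) \<le> exp (- s) * (\<sigma> - t)"
        using \<open>t \<le> \<sigma>\<close> \<open>1 - d \<le> exp (- s)\<close> by (intro mult_right_mono) auto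
      moreover have "exp (- s) * (B - K * (\<sigma> - t)) \<le> exp (- s) * g \<sigma>"
        using g[of \<sigma>] \<open>t \<le> \<sigma>\<close> \<open>\<sigma> \<le> t + c\<close> by (intro mult_left_mono) auto
      moreover have "exp (- s) * (K * (\<sigma> - t)) \<le> K * (\<sigma> - t)"
        using \<open>t \<le> \<sigma>\<close> \<open>exp (- s) \<le> 1\<close> assms(3) by (intro mult_left_le_one_le) auto
      ultimately have "(1 - d - K) * (\<sigma> - t) + B * exp (- s) \<le> exp (- s) * (\<sigma> - t + g \<sigma>)"
        by (simp add: algebra_simps)
      then show ?thesis using True by (simp add: \<sigma>_def)
    qed simp
  qed (use delay exp_minus_has_integral[OF \<open>0 \<le> d\<close>] in \<open>auto simp: has_bochner_integral_iff\<close>)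
  finally show ?thesis unfolding d_def .
qed

section \<open>Bounds on the truncated expected makespan\<close>

text \<open>The factor \<open>exp (1/2)\<close> absorbs \<open>exp d\<close> for the level increments \<open>d \<le> lM c \<le> 1/2\<close> of single tasks.\<close>
definition kappa :: real where
  "kappa = exp (1 / 2) * lM\<^sup>2 / 2"

definition admissible :: "real list \<Rightarrow> real \<Rightarrow> bool" where
  "admissible cs T \<longleftrightarrow> (\<forall>c\<in>set cs. 0 < c \<and> lM * c \<le> 1 / 2) \<and> sum_list cs \<le> T"

lemma admissible_nonneg: "admissible cs T \<Longrightarrow> \<forall>c\<in>set cs. 0 \<le> c"
  by (auto simp: admissible_def less_imp_le)

lemma admissible_Cons:
  assumes "admissible (c # cs) T"
  shows "admissible cs T" "0 < c" "lM * c \<le> 1 / 2" "c + sum_list cs \<le> T" "0 \<le> sum_list cs"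
proof -
  show "0 \<le> sum_list cs"
    using admissible_nonneg[OF assms] by (simp add: sum_list_nonneg)
  then show "admissible cs T" "0 < c" "lM * c \<le> 1 / 2" "c + sum_list cs \<le> T"
    using assms by (auto simp: admissible_def)
qed

lemma second_order_le_kappa:
  assumes "0 < c" "lM * c \<le> 1 / 2" "0 \<le> S" "c + S \<le> T" "0 \<le> d" "d \<le> lM * c"
    and "0 \<le> \<phi>" "\<phi> \<le> lM * c\<^sup>2 / 2"
  shows "lM * S * \<phi> + (1 - exp (- d)) * (lM * c\<^sup>2 / 2) \<le> exp (- d) * (kappa * T * c\<^sup>2)"
    and "d * \<phi> + lM * S * \<phi> \<le> exp (- d) * (kappa * T * c\<^sup>2)"
proof -
  have "1 \<le> exp (1 / 2 - d)"
    using assms by simp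
  then have "1 \<le> exp (- d) * exp (1 / 2)"
    by (simp add: exp_add[symmetric])
  moreover have "0 \<le> lM\<^sup>2 * c\<^sup>2 * T / 2"
    using assms by simp
  ultimately have "lM\<^sup>2 * c\<^sup>2 * T / 2 \<le> (exp (- d) * exp (1 / 2)) * (lM\<^sup>2 * c\<^sup>2 * T / 2)"
    using mult_right_mono[of 1 "exp (- d) * exp (1 / 2)" "lM\<^sup>2 * c\<^sup>2 * T / 2"] by simp
  also have "\<dots> = exp (- d) * (kappa * T * c\<^sup>2)"
    by (simp add: kappa_def algebra_simps)
  finally have "lM\<^sup>2 * c\<^sup>2 * T / 2 \<le> exp (- d) * (kappa * T * c\<^sup>2)" .
  moreover have "lM * c * (lM * c\<^sup>2 / 2) + lM * S * (lM * c\<^sup>2 / 2) = lM\<^sup>2 * c\<^sup>2 / 2 * (c + S)"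
    by (simp add: power2_eq_square algebra_simps)
  moreover have "lM\<^sup>2 * c\<^sup>2 / 2 * (c + S) \<le> lM\<^sup>2 * c\<^sup>2 * T / 2"
    using assms by (simp add: mult_left_mono)
  moreover have "lM * S * \<phi> \<le> lM * S * (lM * c\<^sup>2 / 2)"
    using assms lM_pos by (intro mult_left_mono) auto
  moreover have "(1 - exp (- d)) * (lM * c\<^sup>2 / 2) \<le> lM * c * (lM * c\<^sup>2 / 2)"
    using exp_ge_add_one_self[of "- d"] assms lM_pos by (intro mult_right_mono) auto
  moreover have "d * \<phi> \<le> lM * c * (lM * c\<^sup>2 / 2)"
    using assms by (intro mult_mono) auto
  ultimately show "lM * S * \<phi> + (1 - exp (- d)) * (lM * c\<^sup>2 / 2) \<le> exp (- d) * (kappa * T * c\<^sup>2)"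
    and "d * \<phi> + lM * S * \<phi> \<le> exp (- d) * (kappa * T * c\<^sup>2)"
    by linarith+
qed

lemma approx_makespan_Cons_bounds:
  assumes "\<forall>x\<in>set (c # cs). 0 \<le> x" "t \<le> \<sigma>"
  shows "c + approx_makespan cs (t + c) - lM * sum_list cs * (\<sigma> - t) \<le> approx_makespan (c # cs) \<sigma>"
    and "approx_makespan (c # cs) \<sigma> \<le> c + lM * c\<^sup>2 / 2 + approx_makespan cs (t + c) + lM * sum_list cs * (\<sigma> - t)"
  using approx_makespan_lipschitz[of cs "\<sigma> + c" "t + c"] restart_loss_nonneg[of c \<sigma>] restart_loss_le[of c \<sigma>] assms
  by (auto simp: abs_le_iff)

lemma trunc_exp_real_Cons_le:
  assumes adm: "admissible (c # cs) T" and "0 \<le> t"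
    and tail: "trunc_exp_real N cs (t + c) \<le> approx_makespan cs (t + c) + kappa * T * (\<Sum>x\<leftarrow>cs. x\<^sup>2)"
    and restart: "\<And>M \<sigma>. N = Suc M \<Longrightarrow> t \<le> \<sigma> \<Longrightarrow>
      trunc_exp_real M (c # cs) \<sigma> \<le> approx_makespan (c # cs) \<sigma> + kappa * T * (\<Sum>x\<leftarrow>c # cs. x\<^sup>2)"
  shows "trunc_exp_real N (c # cs) t \<le> approx_makespan (c # cs) t + kappa * T * (\<Sum>x\<leftarrow>c # cs. x\<^sup>2)"
proof -
  define d where "d = Lam (t + c) - Lam t"
  define S where "S = sum_list cs"
  define A where "A = approx_makespan cs (t + c)"
  define B where "B = c + lM * c\<^sup>2 / 2 + A + kappa * T * (\<Sum>x\<leftarrow>c # cs. x\<^sup>2)"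
  note adm' = admissible_Cons[OF adm]
  have nonneg: "\<forall>x\<in>set (c # cs). 0 \<le> x"
    using admissible_nonneg[OF adm] .
  have "0 \<le> d" "d \<le> lM * c" "0 \<le> kappa * T" "0 \<le> A" "0 \<le> (\<Sum>x\<leftarrow>c # cs. x\<^sup>2)"
    using Lam_increment_bounds[of t "t + c"] adm' admissible_def approx_makespan_nonneg nonneg
    by (auto simp: d_def kappa_def A_def sum_list_squares_nonneg)
  then have "0 \<le> B"
    using adm'(2) lM_pos by (simp add: B_def)
  have "trunc_exp_real N (c # cs) t \<le> (1 + lM * S) * restart_loss c t + B * (1 - exp (- d))
      + exp (- d) * (c + trunc_exp_real N cs (t + c))"
  proof (cases N)
    case 0
    have "0 \<le> (1 + lM * S) * restart_loss c t + B * (1 - exp (- d))"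
      using \<open>0 \<le> B\<close> \<open>0 \<le> d\<close> adm' lM_pos restart_loss_nonneg[of c t] by (simp add: S_def)
    then show ?thesis
      using trunc_exp_real_Cons_0[OF \<open>0 \<le> t\<close> nonneg] 0 by (simp add: d_def)
  next
    case (Suc M)
    have "restart_integral (trunc_exp_real M (c # cs)) c t \<le> (1 + lM * S) * restart_loss c t + B * (1 - exp (- d))"
      unfolding d_def
    proof (rule restart_integral_le)
      fix \<sigma> assume "t \<le> \<sigma>" "\<sigma> \<le> t + c"
      then show "0 \<le> trunc_exp_real M (c # cs) \<sigma> \<and> trunc_exp_real M (c # cs) \<sigma> \<le> B + lM * S * (\<sigma> - t)"
        using restart[OF Suc \<open>t \<le> \<sigma>\<close>] trunc_exp_real(2)[of \<sigma> "c # cs" M] nonneg \<open>0 \<le> t\<close>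
          approx_makespan_Cons_bounds(2)[OF nonneg \<open>t \<le> \<sigma>\<close>]
        by (auto simp: B_def A_def S_def)
    qed (use \<open>0 \<le> t\<close> adm' lM_pos in \<open>auto simp: S_def\<close>)
    then show ?thesis
      using trunc_exp_real_Cons_Suc[OF \<open>0 \<le> t\<close> nonneg] Suc by (simp add: d_def)
  qed
  moreover have "lM * S * restart_loss c t + (1 - exp (- d)) * (lM * c\<^sup>2 / 2) \<le> exp (- d) * (kappa * T * c\<^sup>2)"
    using second_order_le_kappa(1) adm' \<open>0 \<le> d\<close> \<open>d \<le> lM * c\<close> restart_loss_nonneg restart_loss_le
    by (simp add: S_def)
  moreover have "exp (- d) * (c + trunc_exp_real N cs (t + c)) \<le> exp (- d) * (c + (A + kappa * T * (\<Sum>x\<leftarrow>cs. x\<^sup>2)))"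
    using tail by (simp add: A_def)
  ultimately show ?thesis
    by (simp add: B_def A_def algebra_simps)
qed

lemma trunc_exp_real_le:
  assumes "admissible cs T" "0 \<le> t"
  shows "trunc_exp_real N cs t \<le> approx_makespan cs t + kappa * T * (\<Sum>x\<leftarrow>cs. x\<^sup>2)"
  using assms
proof (induction N cs arbitrary: t rule: restart_list_induct)
  case (Cons N c cs)
  show ?case
  proof (rule trunc_exp_real_Cons_le[OF Cons.prems])
    fix M \<sigma> assume "N = Suc M" "t \<le> \<sigma>"
    then show "trunc_exp_real M (c # cs) \<sigma> \<le> approx_makespan (c # cs) \<sigma> + kappa * T * (\<Sum>x\<leftarrow>c # cs. x\<^sup>2)"
      using Cons.IH(2) Cons.prems by simp
  qed (use Cons.IH(1) Cons.prems admissible_Cons[OF Cons.prems(1)] in simp)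
qed simp

text \<open>Without restarts the error is large enough to make the lower bound trivial; each allowed restart
  scales it by \<open>1 - exp (-1/2)\<close>, a bound for the probability that a single task is hit at all.\<close>
fun trunc_error :: "nat \<Rightarrow> real list \<Rightarrow> real" where
  "trunc_error N [] = 0"
| "trunc_error 0 (c # cs) = sum_list (c # cs) + lM * (\<Sum>x\<leftarrow>c # cs. x\<^sup>2)"
| "trunc_error (Suc M) (c # cs) = (1 - exp (- 1 / 2)) * trunc_error M (c # cs) + trunc_error (Suc M) cs"

lemma trunc_error_nonneg: "\<forall>c\<in>set cs. 0 \<le> c \<Longrightarrow> 0 \<le> trunc_error N cs"
proof (induction N cs rule: trunc_error.induct)
  case (2 c cs)
  have "0 \<le> lM * (\<Sum>x\<leftarrow>c # cs. x\<^sup>2)"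
    using lM_pos sum_list_squares_nonneg[of "c # cs"] by (intro mult_nonneg_nonneg) auto
  moreover have "0 \<le> sum_list (c # cs)"
    using "2" by (intro sum_list_nonneg) auto
  ultimately show ?case by simp
qed simp_all

lemma trunc_exp_real_Cons_ge:
  assumes adm: "admissible (c # cs) T" and "0 \<le> t"
    and tail: "approx_makespan cs (t + c) - kappa * T * (\<Sum>x\<leftarrow>cs. x\<^sup>2) - trunc_error N cs \<le> trunc_exp_real N cs (t + c)"
    and restart: "\<And>M \<sigma>. N = Suc M \<Longrightarrow> t \<le> \<sigma> \<Longrightarrow>
      approx_makespan (c # cs) \<sigma> - kappa * T * (\<Sum>x\<leftarrow>c # cs. x\<^sup>2) - trunc_error M (c # cs) \<le> trunc_exp_real M (c # cs) \<sigma>"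
  shows "approx_makespan (c # cs) t - kappa * T * (\<Sum>x\<leftarrow>c # cs. x\<^sup>2) - trunc_error N (c # cs)
    \<le> trunc_exp_real N (c # cs) t"
proof (cases N)
  case 0
  have nonneg: "\<forall>x\<in>set (c # cs). 0 \<le> x"
    using admissible_nonneg[OF adm] .
  have "0 \<le> lM * (\<Sum>x\<leftarrow>c # cs. x\<^sup>2)" "0 \<le> kappa * T * (\<Sum>x\<leftarrow>c # cs. x\<^sup>2)"
    using lM_pos sum_list_squares_nonneg[of "c # cs"] admissible_Cons[OF adm] sum_list_nonneg[of cs]
    by (auto simp: kappa_def)
  then show ?thesis
    using approx_makespan_le[OF nonneg, of t] trunc_exp_real(2)[OF \<open>0 \<le> t\<close> nonneg, of N] 0 by simp
next
  case (Suc M)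
  define d where "d = Lam (t + c) - Lam t"
  define S where "S = sum_list cs"
  define E where "E = trunc_error M (c # cs)"
  define B where "B = c + approx_makespan cs (t + c) - kappa * T * (\<Sum>x\<leftarrow>c # cs. x\<^sup>2) - E"
  note adm' = admissible_Cons[OF adm]
  have nonneg: "\<forall>x\<in>set (c # cs). 0 \<le> x"
    using admissible_nonneg[OF adm] .
  have "0 \<le> d" "d \<le> lM * c"
    using Lam_increment_bounds[of t "t + c"] adm' by (auto simp: d_def)
  have "(1 - d - lM * S) * restart_loss c t + B * (1 - exp (- d)) \<le> restart_integral (trunc_exp_real M (c # cs)) c t"
    unfolding d_def
  proof (rule restart_integral_ge[where G="real (Suc M) * sum_list (c # cs)"])
    fix \<sigma> assume "t \<le> \<sigma>" "\<sigma> \<le> t + c"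
    then show "0 \<le> trunc_exp_real M (c # cs) \<sigma> \<and> trunc_exp_real M (c # cs) \<sigma> \<le> real (Suc M) * sum_list (c # cs)
        \<and> B - lM * S * (\<sigma> - t) \<le> trunc_exp_real M (c # cs) \<sigma>"
      using restart[OF Suc \<open>t \<le> \<sigma>\<close>] trunc_exp_real(2,3)[of \<sigma> "c # cs" M] nonneg \<open>0 \<le> t\<close>
        approx_makespan_Cons_bounds(1)[OF nonneg \<open>t \<le> \<sigma>\<close>]
      by (auto simp: B_def E_def S_def)
  qed (use \<open>0 \<le> t\<close> adm' lM_pos in \<open>auto simp: S_def\<close>)
  moreover have "exp (- d) * (c + (approx_makespan cs (t + c) - kappa * T * (\<Sum>x\<leftarrow>cs. x\<^sup>2) - trunc_error N cs))
      \<le> exp (- d) * (c + trunc_exp_real N cs (t + c))"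
    using tail by simp
  moreover have "d * restart_loss c t + lM * S * restart_loss c t \<le> exp (- d) * (kappa * T * c\<^sup>2)"
    using second_order_le_kappa(2) adm' \<open>0 \<le> d\<close> \<open>d \<le> lM * c\<close> restart_loss_nonneg restart_loss_le
    by (simp add: S_def)
  moreover have "(1 - exp (- d)) * E \<le> (1 - exp (- 1 / 2)) * E" "0 \<le> E"
    using trunc_error_nonneg[OF nonneg] \<open>d \<le> lM * c\<close> adm' by (auto simp: E_def intro!: mult_right_mono)
  moreover have "exp (- d) * trunc_error N cs \<le> trunc_error N cs"
    using trunc_error_nonneg[of cs N] nonneg \<open>0 \<le> d\<close> by (intro mult_left_le_one_le) auto
  moreover have "trunc_exp_real N (c # cs) t = restart_integral (trunc_exp_real M (c # cs)) c t
      + exp (- d) * (c + trunc_exp_real N cs (t + c))"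
    using trunc_exp_real_Cons_Suc[OF \<open>0 \<le> t\<close> nonneg] Suc by (simp add: d_def)
  ultimately show ?thesis
    by (simp add: Suc B_def E_def algebra_simps)
qed

lemma trunc_exp_real_ge:
  assumes "admissible cs T" "0 \<le> t"
  shows "approx_makespan cs t - kappa * T * (\<Sum>x\<leftarrow>cs. x\<^sup>2) - trunc_error N cs \<le> trunc_exp_real N cs t"
  using assms
proof (induction N cs arbitrary: t rule: restart_list_induct)
  case (Cons N c cs)
  show ?case
  proof (rule trunc_exp_real_Cons_ge[OF Cons.prems])
    fix M \<sigma> assume "N = Suc M" "t \<le> \<sigma>"
    then show "approx_makespan (c # cs) \<sigma> - kappa * T * (\<Sum>x\<leftarrow>c # cs. x\<^sup>2) - trunc_error M (c # cs) \<le> trunc_exp_real M (c # cs) \<sigma>"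
      using Cons.IH(2) Cons.prems by simp
  qed (use Cons.IH(1) Cons.prems admissible_Cons[OF Cons.prems(1)] in simp)
qed simp

lemma trunc_error_geometric:
  assumes "\<forall>c\<in>set cs. 0 \<le> c" "1 - exp (- 1 / 2) < r"
  shows "\<exists>K. \<forall>N. trunc_error N cs \<le> K * r ^ N"
  using assms(1)
proof (induction cs)
  case (Cons c cs)
  define q :: real where "q = 1 - exp (- 1 / 2)"
  have "0 < q" "q < r"
    using assms(2) unfolding q_def by auto
  obtain K1 where K1: "\<forall>N. trunc_error N cs \<le> K1 * r ^ N"
    using Cons by auto
  define K where "K = max (trunc_error 0 (c # cs)) (K1 * r / (r - q))"
  have "trunc_error N (c # cs) \<le> K * r ^ N" for N
  proof (induction N)
    case (Suc M)
    have "K1 * r / (r - q) \<le> K"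
      by (simp add: K_def)
    then have "K1 * r \<le> K * (r - q)"
      using \<open>q < r\<close> by (simp add: pos_divide_le_eq)
    then have contraction: "(q * K + K1 * r) * r ^ M \<le> (K * r) * r ^ M"
      using \<open>q < r\<close> \<open>0 < q\<close> by (intro mult_right_mono) (auto simp: algebra_simps)
    have "q * trunc_error M (c # cs) \<le> q * (K * r ^ M)"
      using Suc.IH \<open>0 < q\<close> by (intro mult_left_mono) auto
    moreover have "trunc_error (Suc M) (c # cs) = q * trunc_error M (c # cs) + trunc_error (Suc M) cs"
      by (simp add: q_def)
    moreover have "trunc_error (Suc M) cs \<le> K1 * r ^ Suc M"
      using K1 by blast
    ultimately have "trunc_error (Suc M) (c # cs) \<le> (q * K + K1 * r) * r ^ M"
      by (simp add: algebra_simps)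
    with contraction show ?case
      by simp
  qed (simp add: K_def)
  then show ?case
    by blast
qed (auto intro: exI[of _ 0])

lemma trunc_error_tendsto_0: "\<forall>c\<in>set cs. 0 \<le> c \<Longrightarrow> (\<lambda>N. trunc_error N cs) \<longlonglongrightarrow> 0"
proof -
  assume nonneg: "\<forall>c\<in>set cs. 0 \<le> c"
  have "1 - exp (- 1 / 2) < 1 - exp (- 1 :: real)"
    by simp
  from trunc_error_geometric[OF nonneg this]
  obtain K where K: "\<forall>N. trunc_error N cs \<le> K * (1 - exp (- 1)) ^ N"
    by blast
  have "(\<lambda>N. (1 - exp (- 1 :: real)) ^ N) \<longlonglongrightarrow> 0"
    by (rule LIMSEQ_power_zero) (simp add: abs_if)
  then have "(\<lambda>N. K * (1 - exp (- 1 :: real)) ^ N) \<longlonglongrightarrow> 0"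
    by (rule tendsto_mult_right_zero)
  moreover have "\<forall>\<^sub>F N in sequentially. 0 \<le> trunc_error N cs"
    using trunc_error_nonneg[OF nonneg] by simp
  moreover have "\<forall>\<^sub>F N in sequentially. trunc_error N cs \<le> K * (1 - exp (- 1)) ^ N"
    using K by simp
  ultimately show ?thesis
    using tendsto_sandwich[of "\<lambda>_. 0" "\<lambda>N. trunc_error N cs" sequentially "\<lambda>N. K * (1 - exp (- 1)) ^ N" 0]
    by simp
qed

section \<open>Convergence to the expected makespan\<close>

definition future_disruptions :: "real set \<Rightarrow> real \<Rightarrow> real \<Rightarrow> (nat \<Rightarrow> real) \<Rightarrow> bool" where
  "future_disruptions D t p \<omega> \<longleftrightarrow> 0 \<le> t \<and> Lam t \<le> p \<and> (\<forall>i. 0 \<le> \<omega> i) \<and>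
     D \<inter> {t<..} = {s. t < s \<and> (\<exists>k. Lam s = p + (\<Sum>i<k. \<omega> i))}"

lemma future_disruptions_level_le:
  assumes "future_disruptions D t p \<omega>" "s \<in> D" "t < s"
  shows "p \<le> Lam s"
proof -
  obtain k where "Lam s = p + (\<Sum>i<k. \<omega> i)"
    using assms unfolding future_disruptions_def by blast
  moreover have "0 \<le> (\<Sum>i<k. \<omega> i)"
    using assms(1) unfolding future_disruptions_def by (auto intro: sum_nonneg)
  ultimately show ?thesis by simp
qed

lemma task_finish_uninterrupted:
  assumes D: "future_disruptions D t p \<omega>" and "0 < c" "Lam (t + c) \<le> p"
  shows "task_finish D t c = t + c" "future_disruptions D (t + c) p \<omega>"
proof -
  have "0 \<le> t" using D unfolding future_disruptions_def by simp
  have "D \<inter> {t<..<t + c} = {}"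
  proof (rule ccontr)
    assume "D \<inter> {t<..<t + c} \<noteq> {}"
    then obtain s where "s \<in> D" "t < s" "s < t + c" by auto
    then have "p \<le> Lam s" "Lam s < Lam (t + c)"
      using future_disruptions_level_le[OF D] Lam_strict_mono[of s "t + c"] \<open>0 \<le> t\<close> by auto
    then show False using assms(3) by simp
  qed
  then show "task_finish D t c = t + c"
    unfolding task_finish_def by (intro cInf_eq_minimum) auto
  have "D \<inter> {t + c<..} = (D \<inter> {t<..}) \<inter> {t + c<..}"
    using \<open>0 < c\<close> by auto
  then show "future_disruptions D (t + c) p \<omega>"
    using D assms(2,3) unfolding future_disruptions_def by auto
qed

lemma future_disruptions_shift:
  assumes D: "future_disruptions D t p \<omega>" and "t \<le> \<sigma>" "Lam \<sigma> = p"
  shows "future_disruptions D \<sigma> (p + \<omega> 0) (\<lambda>i. \<omega> (Suc i))"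
proof -
  have "0 \<le> \<sigma>" "\<forall>i. 0 \<le> \<omega> i"
    using D assms unfolding future_disruptions_def by auto
  have shift: "(\<exists>k. Lam s = p + (\<Sum>i<k. \<omega> i)) \<longleftrightarrow> (\<exists>k. Lam s = p + \<omega> 0 + (\<Sum>i<k. \<omega> (Suc i)))"
    if "\<sigma> < s" for s
  proof -
    have "p < Lam s"
      using Lam_strict_mono[OF \<open>0 \<le> \<sigma>\<close> that] assms by simp
    show ?thesis
    proof
      assume "\<exists>k. Lam s = p + (\<Sum>i<k. \<omega> i)"
      then obtain k where k: "Lam s = p + (\<Sum>i<k. \<omega> i)" by blast
      with \<open>p < Lam s\<close> obtain k' where "k = Suc k'" by (cases k) auto
      then have "Lam s = p + \<omega> 0 + (\<Sum>i<k'. \<omega> (Suc i))"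
        using k by (simp only: sum.lessThan_Suc_shift add.assoc)
      then show "\<exists>k. Lam s = p + \<omega> 0 + (\<Sum>i<k. \<omega> (Suc i))" by blast
    next
      assume "\<exists>k. Lam s = p + \<omega> 0 + (\<Sum>i<k. \<omega> (Suc i))"
      then obtain k where "Lam s = p + \<omega> 0 + (\<Sum>i<k. \<omega> (Suc i))" by blast
      then have "Lam s = p + (\<Sum>i<Suc k. \<omega> i)"
        by (simp only: sum.lessThan_Suc_shift add.assoc)
      then show "\<exists>k. Lam s = p + (\<Sum>i<k. \<omega> i)" by blast
    qed
  qed
  have "D \<inter> {\<sigma><..} = (D \<inter> {t<..}) \<inter> {\<sigma><..}"
    using assms by auto
  also have "\<dots> = {s. \<sigma> < s \<and> (\<exists>k. Lam s = p + \<omega> 0 + (\<Sum>i<k. \<omega> (Suc i)))}"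
    using D assms shift unfolding future_disruptions_def by auto
  finally show ?thesis
    using \<open>0 \<le> \<sigma>\<close> \<open>\<forall>i. 0 \<le> \<omega> i\<close> assms unfolding future_disruptions_def by auto
qed

lemma task_finish_restart:
  assumes D: "future_disruptions D t p \<omega>" and "0 < c" "p < Lam (t + c)"
  shows "task_finish D t c = task_finish D (Lam_inv p) c" "t \<le> Lam_inv p"
    "future_disruptions D (Lam_inv p) (p + \<omega> 0) (\<lambda>i. \<omega> (Suc i))"
proof -
  define \<sigma> where "\<sigma> = Lam_inv p"
  have "0 \<le> t" "Lam t \<le> p"
    using D unfolding future_disruptions_def by auto
  then have "0 \<le> p" "Lam \<sigma> = p" "0 \<le> \<sigma>"
    using Lam_nonneg[of t] Lam_Lam_inv Lam_inv(1) by (auto simp: \<sigma>_def)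
  then have "t \<le> \<sigma>" "\<sigma> < t + c"
    using Lam_le_iff[of t \<sigma>] Lam_less_iff[of \<sigma> "t + c"] \<open>Lam t \<le> p\<close> \<open>0 \<le> t\<close> assms by auto
  then show "t \<le> Lam_inv p" "future_disruptions D (Lam_inv p) (p + \<omega> 0) (\<lambda>i. \<omega> (Suc i))"
    using future_disruptions_shift[OF D _ \<open>Lam \<sigma> = p\<close>] by (simp_all add: \<sigma>_def)
  show "task_finish D t c = task_finish D (Lam_inv p) c"
  proof (cases "\<sigma> = t")
    case False
    then have "t < \<sigma>" using \<open>t \<le> \<sigma>\<close> by simp
    then have "\<sigma> \<in> {s. t < s \<and> (\<exists>k. Lam s = p + (\<Sum>i<k. \<omega> i))}"
      using \<open>Lam \<sigma> = p\<close> by (auto intro!: exI[of _ 0])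
    then have "\<sigma> \<in> D"
      using D unfolding future_disruptions_def by blast
    have "(u = t \<or> u \<in> D \<and> t < u) \<and> D \<inter> {u<..<u + c} = {} \<longleftrightarrow>
          (u = \<sigma> \<or> u \<in> D \<and> \<sigma> < u) \<and> D \<inter> {u<..<u + c} = {}" for u
    proof
      assume u: "(u = t \<or> u \<in> D \<and> t < u) \<and> D \<inter> {u<..<u + c} = {}"
      then have "u \<noteq> t" using \<open>\<sigma> \<in> D\<close> \<open>t < \<sigma>\<close> \<open>\<sigma> < t + c\<close> by auto
      then have "u \<in> D" "t < u" using u by auto
      then have "\<sigma> \<le> u"
        using future_disruptions_level_le[OF D] Lam_le_iff[of \<sigma> u] \<open>Lam \<sigma> = p\<close> \<open>0 \<le> \<sigma>\<close> \<open>0 \<le> t\<close> by auto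
      then show "(u = \<sigma> \<or> u \<in> D \<and> \<sigma> < u) \<and> D \<inter> {u<..<u + c} = {}"
        using u \<open>u \<in> D\<close> by auto
    qed (use \<open>\<sigma> \<in> D\<close> \<open>t < \<sigma>\<close> in auto)
    then show ?thesis
      unfolding task_finish_def \<sigma>_def[symmetric] by simp
  qed (simp add: \<sigma>_def)
qed

definition trunc_makespan_settles :: "real set \<Rightarrow> real list \<Rightarrow> real \<Rightarrow> real \<Rightarrow> (nat \<Rightarrow> real) \<Rightarrow> bool" where
  "trunc_makespan_settles D cs t p \<omega> \<longleftrightarrow> t \<le> seq_finish D t cs \<and>
     (\<forall>\<^sub>F N in sequentially. trunc_makespan N cs t p \<omega> = ennreal (seq_finish D t cs - t))"

lemma trunc_makespan_settles_complete:
  assumes D: "future_disruptions D t p \<omega>" and "0 < c" "Lam (t + c) \<le> p"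
    and "trunc_makespan_settles D cs (t + c) p \<omega>"
  shows "trunc_makespan_settles D (c # cs) t p \<omega>"
  using task_finish_uninterrupted(1)[OF assms(1-3)] assms(2-4)
  by (auto simp: trunc_makespan_settles_def trunc_makespan_complete ennreal_plus[symmetric]
      elim!: eventually_mono simp del: ennreal_plus)

lemma trunc_makespan_settles_restart:
  assumes D: "future_disruptions D t p \<omega>" and "0 < c" "p < Lam (t + c)"
    and after: "trunc_makespan_settles D (c # cs) (Lam_inv p) (p + \<omega> 0) (\<lambda>i. \<omega> (Suc i))"
  shows "trunc_makespan_settles D (c # cs) t p \<omega>"
proof -
  have tf: "task_finish D t c = task_finish D (Lam_inv p) c" and "t \<le> Lam_inv p"
    using task_finish_restart[OF D \<open>0 < c\<close> \<open>p < Lam (t + c)\<close>] by auto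
  have "\<forall>\<^sub>F N in sequentially. trunc_makespan (Suc N) (c # cs) t p \<omega> = ennreal (seq_finish D t (c # cs) - t)"
    using after unfolding trunc_makespan_settles_def
    by (auto simp: trunc_makespan_restart[OF \<open>p < Lam (t + c)\<close>] tf \<open>t \<le> Lam_inv p\<close>
        ennreal_plus[symmetric] elim!: eventually_mono simp del: ennreal_plus)
  then have "\<forall>\<^sub>F N in sequentially. trunc_makespan N (c # cs) t p \<omega> = ennreal (seq_finish D t (c # cs) - t)"
    by (subst eventually_sequentially_Suc[symmetric])
  then show ?thesis
    using after \<open>t \<le> Lam_inv p\<close> tf by (simp add: trunc_makespan_settles_def)
qed

text \<open>A task with \<open>lM c \<le> 1/2\<close> that is restarted right before a level gap of at least \<open>1/2\<close> is
  completed, so on a path with infinitely many such gaps it is completed after finitely many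
  restarts.\<close>
lemma trunc_makespan_settles_Cons:
  assumes "0 < c" "lM * c \<le> 1 / 2"
    and tail: "\<And>t p \<omega>. future_disruptions D t p \<omega> \<Longrightarrow> \<exists>\<^sub>F i in sequentially. 1 / 2 \<le> \<omega> i \<Longrightarrow>
      trunc_makespan_settles D cs t p \<omega>"
    and "future_disruptions D t p \<omega>" "\<exists>\<^sub>F i in sequentially. 1 / 2 \<le> \<omega> i" "1 / 2 \<le> \<omega> m"
  shows "trunc_makespan_settles D (c # cs) t p \<omega>"
  using assms(4-6)
proof (induction m arbitrary: t p \<omega> rule: less_induct)
  case (less m t p \<omega>)
  have complete: "trunc_makespan_settles D (c # cs) t p \<omega>"
    if D: "future_disruptions D t p \<omega>" and "\<exists>\<^sub>F i in sequentially. 1 / 2 \<le> \<omega> i" "Lam (t + c) \<le> p" for t p \<omega>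
    using trunc_makespan_settles_complete[OF D \<open>0 < c\<close> that(3)] tail that
      task_finish_uninterrupted(2)[OF D \<open>0 < c\<close> that(3)] by simp
  show ?case
  proof (cases "Lam (t + c) \<le> p")
    case False
    define \<sigma> where "\<sigma> = Lam_inv p"
    have D': "future_disruptions D \<sigma> (p + \<omega> 0) (\<lambda>i. \<omega> (Suc i))"
      using task_finish_restart(3)[OF less.prems(1) \<open>0 < c\<close>] False by (simp add: \<sigma>_def)
    have "Lam \<sigma> = p"
      using less.prems(1) Lam_nonneg Lam_Lam_inv[of p] unfolding \<sigma>_def future_disruptions_def
      by (meson order_trans)
    have freq: "\<exists>\<^sub>F i in sequentially. 1 / 2 \<le> \<omega> (Suc i)"
      using less.prems(2) frequently_sequentially_Suc[of "\<lambda>i. 1 / 2 \<le> \<omega> i"] by simp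
    have "trunc_makespan_settles D (c # cs) \<sigma> (p + \<omega> 0) (\<lambda>i. \<omega> (Suc i))"
    proof (cases "1 / 2 \<le> \<omega> 0")
      case True
      then have "Lam (\<sigma> + c) \<le> p + \<omega> 0"
        using Lam_increment_bounds(2)[of \<sigma> "\<sigma> + c"] \<open>Lam \<sigma> = p\<close> \<open>lM * c \<le> 1 / 2\<close> \<open>0 < c\<close> by simp
      then show ?thesis
        using complete D' freq by blast
    next
      case False
      then obtain m' where "m = Suc m'"
        using less.prems(3) by (cases m) auto
      then show ?thesis
        using less.IH[of m' \<sigma> "p + \<omega> 0" "\<lambda>i. \<omega> (Suc i)"] D' freq less.prems(3) by simp
    qed
    then show ?thesis
      using trunc_makespan_settles_restart[OF less.prems(1) \<open>0 < c\<close>] False by (simp add: \<sigma>_def)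
  qed (use less.prems complete in blast)
qed

lemma trunc_makespan_settles:
  assumes "\<forall>c\<in>set cs. 0 < c \<and> lM * c \<le> 1 / 2" "future_disruptions D t p \<omega>"
    and "\<exists>\<^sub>F i in sequentially. 1 / 2 \<le> \<omega> i"
  shows "trunc_makespan_settles D cs t p \<omega>"
  using assms
proof (induction cs arbitrary: t p \<omega>)
  case (Cons c cs)
  obtain m where "1 / 2 \<le> \<omega> m"
    using frequently_ex[OF Cons.prems(3)] by blast
  then show ?case
    using Cons.IH Cons.prems by (intro trunc_makespan_settles_Cons[where m=m]) auto
qed (simp add: trunc_makespan_settles_def)

lemma future_disruptions_start:
  assumes "\<forall>i. 0 \<le> w i"
  shows "future_disruptions (disruptions lam w) 0 (w 0) (\<lambda>i. w (Suc i))"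
proof -
  have "(\<Sum>i\<le>k. w i) = w 0 + (\<Sum>i<k. w (Suc i))" for k
    by (simp only: lessThan_Suc_atMost[symmetric] sum.lessThan_Suc_shift)
  then have "disruptions lam w \<inter> {0<..} = {s. 0 < s \<and> (\<exists>k. Lam s = w 0 + (\<Sum>i<k. w (Suc i)))}"
    unfolding disruptions_def Lam_def by auto
  then show ?thesis
    using assms unfolding future_disruptions_def by auto
qed

theorem exp_makespan_eq_SUP_trunc_exp:
  assumes "\<forall>c\<in>set cs. 0 < c \<and> lM * c \<le> 1 / 2"
  shows "exp_makespan lam cs 0 = (SUP N. trunc_exp N cs 0)"
proof -
  have "exp_makespan lam cs 0 = (\<integral>\<^sup>+ w. (SUP N. trunc_makespan N cs 0 (Lam 0 + w 0) (\<lambda>i. w (Suc i))) \<partial>Exp_seq.S)"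
    unfolding exp_makespan_def exp_space_eq[symmetric]
  proof (rule nn_integral_cong_AE)
    show "AE w in exp_space. ennreal (seq_finish (disruptions lam w) 0 cs - 0)
        = (SUP N. trunc_makespan N cs 0 (Lam 0 + w 0) (\<lambda>i. w (Suc i)))"
      using AE_exp_space_nonneg AE_exp_space_frequently_ge_half
    proof eventually_elim
      case (elim w)
      then have "\<forall>\<^sub>F N in sequentially. trunc_makespan N cs 0 (w 0) (\<lambda>i. w (Suc i))
          = ennreal (seq_finish (disruptions lam w) 0 cs - 0)"
        using trunc_makespan_settles[OF assms future_disruptions_start]
          frequently_sequentially_Suc[of "\<lambda>i. 1 / 2 \<le> w i"] by (simp add: trunc_makespan_settles_def)
      then have "(\<lambda>N. trunc_makespan N cs 0 (w 0) (\<lambda>i. w (Suc i)))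
          \<longlonglongrightarrow> ennreal (seq_finish (disruptions lam w) 0 cs - 0)"
        by (rule tendsto_eventually)
      then show ?case
        using LIMSEQ_unique[OF _ LIMSEQ_SUP[OF incseq_trunc_makespan]] by simp
    qed
  qed
  also have "\<dots> = (SUP N. trunc_exp N cs 0)"
    unfolding trunc_exp_def
    by (rule nn_integral_monotone_convergence_SUP) (auto simp: incseq_def le_fun_def intro: incseq_trunc_makespan[THEN incseqD])
  finally show ?thesis .
qed

theorem exp_makespan_le:
  assumes "admissible cs T"
  shows "exp_makespan lam cs 0 \<le> ennreal (approx_makespan cs 0 + kappa * T * (\<Sum>c\<leftarrow>cs. c\<^sup>2))"
proof -
  have "trunc_exp N cs 0 \<le> ennreal (approx_makespan cs 0 + kappa * T * (\<Sum>c\<leftarrow>cs. c\<^sup>2))" for N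
    using trunc_exp_real(1)[of 0 cs N] trunc_exp_real_le[OF assms, of 0 N] admissible_nonneg[OF assms]
    by (simp add: ennreal_leI)
  then show ?thesis
    using exp_makespan_eq_SUP_trunc_exp assms by (simp add: admissible_def SUP_least)
qed

theorem exp_makespan_ge:
  assumes "admissible cs T"
  shows "ennreal (approx_makespan cs 0 - kappa * T * (\<Sum>c\<leftarrow>cs. c\<^sup>2)) \<le> exp_makespan lam cs 0"
proof -
  define m where "m = enn2real (exp_makespan lam cs 0)"
  have "exp_makespan lam cs 0 < \<top>"
    using exp_makespan_le[OF assms] ennreal_less_top le_less_trans by blast
  then have m: "exp_makespan lam cs 0 = ennreal m" "0 \<le> m"
    unfolding m_def by simp_all
  have "approx_makespan cs 0 - kappa * T * (\<Sum>c\<leftarrow>cs. c\<^sup>2) - trunc_error N cs \<le> m" for N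
  proof -
    have "trunc_exp N cs 0 \<le> (SUP N. trunc_exp N cs 0)"
      by (rule SUP_upper) simp
    then have "ennreal (trunc_exp_real N cs 0) \<le> exp_makespan lam cs 0"
      using trunc_exp_real(1)[of 0 cs N] admissible_nonneg[OF assms] exp_makespan_eq_SUP_trunc_exp assms
      by (simp add: admissible_def)
    then show ?thesis
      using trunc_exp_real_ge[OF assms, of 0 N] trunc_exp_real(2)[of 0 cs N] admissible_nonneg[OF assms] m
      by (simp add: ennreal_le_iff)
  qed
  moreover have "(\<lambda>N. approx_makespan cs 0 - kappa * T * (\<Sum>c\<leftarrow>cs. c\<^sup>2) - trunc_error N cs)
      \<longlonglongrightarrow> approx_makespan cs 0 - kappa * T * (\<Sum>c\<leftarrow>cs. c\<^sup>2) - 0"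
    using trunc_error_tendsto_0[OF admissible_nonneg[OF assms]] by (intro tendsto_intros)
  ultimately have "approx_makespan cs 0 - kappa * T * (\<Sum>c\<leftarrow>cs. c\<^sup>2) \<le> m"
    using LIMSEQ_le_const2 by force
  then show ?thesis
    using m by (simp add: ennreal_leI)
qed

section \<open>Comparing schedules\<close>

lemma approx_makespan_sched:
  assumes "bij_betw \<rho> {1..n} {1..n}" "\<forall>i\<in>{1..n}. 0 \<le> a i"
  shows "approx_makespan (sched a n \<rho>) 0 = (\<Sum>k=1..n. a k) + (\<Sum>i=1..n. a (\<rho> i) * Lam (\<Sum>k=1..i. a (\<rho> k)))
    - integral {0..\<Sum>k=1..n. a k} Lam"
proof -
  have "sum_list (sched a n \<rho>) = (\<Sum>k=1..n. a k)"
    unfolding sched_def sum_list_map_upt using assms(1) by (rule sum.reindex_bij_betw)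
  moreover have "\<forall>c\<in>set (sched a n \<rho>). 0 \<le> c"
    using assms by (auto simp: sched_def bij_betw_def)
  ultimately show ?thesis
    using approx_makespan_eq[of "sched a n \<rho>" 0] completion_weighted_Lam_upt[of "\<lambda>i. a (\<rho> i)" n]
    by (simp add: sched_def)
qed

lemma admissible_sched:
  assumes "bij_betw \<rho> {1..n} {1..n}" "\<forall>i\<in>{1..n}. 0 < a i \<and> lM * a i \<le> 1 / 2"
  shows "admissible (sched a n \<rho>) (\<Sum>k=1..n. a k)"
    and "(\<Sum>c\<leftarrow>sched a n \<rho>. c\<^sup>2) = (\<Sum>k=1..n. (a k)\<^sup>2)"
proof -
  have "\<rho> i \<in> {1..n}" if "i \<in> {1..n}" for i
    using assms(1) that by (auto simp: bij_betw_def)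
  moreover have "sum_list (sched a n \<rho>) = (\<Sum>k=1..n. a k)"
    unfolding sched_def sum_list_map_upt using assms(1) by (rule sum.reindex_bij_betw)
  ultimately show "admissible (sched a n \<rho>) (\<Sum>k=1..n. a k)"
    using assms(2) by (auto simp: admissible_def sched_def)
  show "(\<Sum>c\<leftarrow>sched a n \<rho>. c\<^sup>2) = (\<Sum>k=1..n. (a k)\<^sup>2)"
    unfolding sched_def map_map comp_def sum_list_map_upt using assms(1)
    by (rule sum.reindex_bij_betw[where g="\<lambda>k. (a k)\<^sup>2"])
qed

theorem exp_makespan_sched_less:
  assumes "\<forall>i\<in>{1..n}. 0 < a i \<and> lM * a i \<le> 1 / 2"
    and "bij_betw \<sigma> {1..n} {1..n}" "bij_betw \<pi> {1..n} {1..n}"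
    and gap: "(\<Sum>i=1..n. a (\<sigma> i) * Lam (\<Sum>k=1..i. a (\<sigma> k))) + 2 * kappa * (\<Sum>k=1..n. a k) * (\<Sum>k=1..n. (a k)\<^sup>2)
      < (\<Sum>i=1..n. a (\<pi> i) * Lam (\<Sum>k=1..i. a (\<pi> k)))"
  shows "exp_makespan lam (sched a n \<sigma>) 0 < exp_makespan lam (sched a n \<pi>) 0"
proof -
  let ?A = "\<Sum>k=1..n. a k" and ?Q = "\<Sum>k=1..n. (a k)\<^sup>2"
  have "0 \<le> approx_makespan (sched a n \<sigma>) 0"
    using approx_makespan_nonneg admissible_nonneg[OF admissible_sched(1)[OF assms(2,1)]] by blast
  moreover have "0 \<le> kappa * ?A * ?Q"
    using assms(1) by (intro mult_nonneg_nonneg sum_nonneg) (auto simp: kappa_def less_imp_le)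
  ultimately have "0 \<le> approx_makespan (sched a n \<sigma>) 0 + kappa * ?A * ?Q"
    by simp
  moreover have "approx_makespan (sched a n \<sigma>) 0 + kappa * ?A * ?Q < approx_makespan (sched a n \<pi>) 0 - kappa * ?A * ?Q"
    using gap approx_makespan_sched[OF assms(2)] approx_makespan_sched[OF assms(3)] assms(1)
    by (simp add: less_imp_le)
  moreover have "exp_makespan lam (sched a n \<sigma>) 0 \<le> ennreal (approx_makespan (sched a n \<sigma>) 0 + kappa * ?A * ?Q)"
    using exp_makespan_le[OF admissible_sched(1)[OF assms(2,1)]] admissible_sched(2)[OF assms(2,1)] by simp
  moreover have "ennreal (approx_makespan (sched a n \<sigma>) 0 + kappa * ?A * ?Q)
      < ennreal (approx_makespan (sched a n \<pi>) 0 - kappa * ?A * ?Q)"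
    using calculation by (intro ennreal_lessI) auto
  ultimately have "exp_makespan lam (sched a n \<sigma>) 0 < ennreal (approx_makespan (sched a n \<pi>) 0 - kappa * ?A * ?Q)"
    using le_less_trans by blast
  also have "\<dots> \<le> exp_makespan lam (sched a n \<pi>) 0"
    using exp_makespan_ge[OF admissible_sched(1)[OF assms(3,1)]] admissible_sched(2)[OF assms(3,1)] by simp
  finally show ?thesis .
qed

end

lemma bounded_intensity_scaled:
  fixes f :: "real \<Rightarrow> real"
  assumes "0 < lb" "\<forall>t\<ge>0. 0 < f t" "f differentiable_on {0..}"
    and "Inf (f ` {0..}) > 0" "bdd_above (f ` {0..})"
  shows "bounded_intensity (\<lambda>t. lb * f t) (lb * Inf (f ` {0..})) (lb * Sup (f ` {0..}))"
proof
  show "continuous_on {0..} (\<lambda>t. lb * f t)"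
    using differentiable_imp_continuous_on[OF assms(3)] by (intro continuous_intros)
  show "0 < lb * Inf (f ` {0..})"
    using assms by simp
  fix t :: real
  assume "0 \<le> t"
  moreover have "bdd_below (f ` {0..})"
    using assms(2) by (auto intro!: bdd_belowI[of _ 0] less_imp_le)
  ultimately show "lb * Inf (f ` {0..}) \<le> lb * f t" "lb * f t \<le> lb * Sup (f ` {0..})"
    using assms(1,5) by (auto intro!: cInf_lower cSup_upper)
qed

theorem exp_makespan_less_if_integral_gap:
  fixes a :: "nat \<Rightarrow> real" and f :: "real \<Rightarrow> real"
  assumes a_pos: "\<forall>i\<in>{1..n}. 0 < a i" and a_le: "\<forall>i\<in>{1..n}. a i \<le> a n" and "1 \<le> n"
    and lb_pos: "0 < lb" and f_pos: "\<forall>t\<ge>0. 0 < f t" and f_diff: "f differentiable_on {0..}"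
    and f_inf: "Inf (f ` {0..}) > 0" and f_sup: "bdd_above (f ` {0..})"
    and lb_small: "lb \<le> 1 / (2 * Sup (f ` {0..}) * a n)"
    and bij: "bij_betw \<sigma> {1..n} {1..n}" "bij_betw \<pi> {1..n} {1..n}"
    and gap: "lb < ((\<Sum>i=1..n. a (\<pi> i) * integral {0..(\<Sum>k=1..i. a (\<pi> k))} f)
                - (\<Sum>i=1..n. a (\<sigma> i) * integral {0..(\<Sum>k=1..i. a (\<sigma> k))} f))
             / ((Sup (f ` {0..}))\<^sup>2 * (\<Sum>k=1..n. a k) * (\<Sum>i=1..n. (a i)\<^sup>2)
                + (Sup (f ` {0..}))\<^sup>2 * (3/4) * (\<Sum>k=1..n. a k) ^ 3)"
  shows "exp_makespan (\<lambda>t. lb * f t) (sched a n \<sigma>) 0 < exp_makespan (\<lambda>t. lb * f t) (sched a n \<pi>) 0"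
proof -
  define fM where "fM = Sup (f ` {0..})"
  define A where "A = (\<Sum>k=1..n. a k)"
  define Q where "Q = (\<Sum>k=1..n. (a k)\<^sup>2)"
  define G where "G \<rho> = (\<Sum>i=1..n. a (\<rho> i) * integral {0..(\<Sum>k=1..i. a (\<rho> k))} f)" for \<rho> :: "nat \<Rightarrow> nat"
  interpret bounded_intensity "\<lambda>t. lb * f t" "lb * Inf (f ` {0..})" "lb * fM"
    unfolding fM_def using lb_pos f_pos f_diff f_inf f_sup by (rule bounded_intensity_scaled)
  have "0 < fM"
    using lM_pos lb_pos by (simp add: zero_less_mult_iff)
  have "0 < A"
    unfolding A_def using a_pos \<open>1 \<le> n\<close> by (intro sum_pos) auto
  have "0 \<le> Q" "Q \<le> A\<^sup>2"
    unfolding Q_def A_def using a_pos by (auto intro!: sum_nonneg sum_squares_le_square_sum simp: less_imp_le)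
  have adm: "\<forall>i\<in>{1..n}. 0 < a i \<and> lb * fM * a i \<le> 1 / 2"
    using lengths_le_half[OF a_pos a_le \<open>1 \<le> n\<close> lb_small[folded fM_def] \<open>0 < fM\<close> lb_pos] .
  have "2 * kappa * A * Q = exp (1 / 2) * (lb * fM)\<^sup>2 * A * Q"
    by (simp add: kappa_def)
  also have "\<dots> \<le> lb\<^sup>2 * (fM\<^sup>2 * A * Q + fM\<^sup>2 * (3 / 4) * A ^ 3)"
    using \<open>0 < A\<close> \<open>0 \<le> Q\<close> \<open>Q \<le> A\<^sup>2\<close> by (intro exp_half_error_le) auto
  finally have second_order: "2 * kappa * A * Q \<le> lb\<^sup>2 * (fM\<^sup>2 * A * Q + fM\<^sup>2 * (3 / 4) * A ^ 3)" .
  have "lb * (fM\<^sup>2 * A * Q + fM\<^sup>2 * (3 / 4) * A ^ 3) < G \<pi> - G \<sigma>"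
  proof -
    have "0 < fM\<^sup>2 * A * Q + fM\<^sup>2 * (3 / 4) * A ^ 3"
      using \<open>0 < fM\<close> \<open>0 < A\<close> \<open>0 \<le> Q\<close> by (intro add_nonneg_pos) auto
    moreover have "lb < (G \<pi> - G \<sigma>) / (fM\<^sup>2 * A * Q + fM\<^sup>2 * (3 / 4) * A ^ 3)"
      using gap unfolding G_def A_def Q_def fM_def .
    ultimately show ?thesis
      by (simp add: pos_less_divide_eq mult.commute)
  qed
  then have "lb * (lb * (fM\<^sup>2 * A * Q + fM\<^sup>2 * (3 / 4) * A ^ 3)) < lb * (G \<pi> - G \<sigma>)"
    using lb_pos by simp
  with second_order have "lb * G \<sigma> + 2 * kappa * A * Q < lb * G \<pi>"
    by (simp add: power2_eq_square algebra_simps)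
  moreover have "(\<Sum>i=1..n. a (\<rho> i) * Lam (\<Sum>k=1..i. a (\<rho> k))) = lb * G \<rho>" for \<rho>
    by (simp add: G_def Lam_def cum_int_def sum_distrib_left algebra_simps)
  ultimately show ?thesis
    using exp_makespan_sched_less[OF adm bij] by (simp add: A_def Q_def)
qed

theorem theorem1:
  fixes a :: "nat \<Rightarrow> real" and n :: nat and lb :: real and f :: "real \<Rightarrow> real"
  assumes a_pos: "\<forall>i\<in>{1..n}. 0 < a i"
    and a_incr: "\<forall>i j. 1 \<le> i \<longrightarrow> i < j \<longrightarrow> j \<le> n \<longrightarrow> a i < a j"
    and lb_pos: "0 < lb"
    and f_pos: "\<forall>t\<ge>0. 0 < f t"
    and f_diff: "f differentiable_on {0..}"
    and f_inf: "Inf (f ` {0..}) > 0"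
    and f_sup: "bdd_above (f ` {0..})"
    and lb_small: "lb \<le> 1 / (2 * Sup (f ` {0..}) * a n)"
  shows
   "((\<forall>x y. 0 \<le> x \<longrightarrow> x < y \<longrightarrow> y \<le> (\<Sum>k=1..n. a k) \<longrightarrow> f y < f x) \<and>
     (\<forall>\<pi>. \<pi> permutes {1..n} \<and> \<pi> \<noteq> id \<longrightarrow>
        lb < ((\<Sum>i=1..n. a (\<pi> i) * integral {0..(\<Sum>k=1..i. a (\<pi> k))} f)
                - (\<Sum>i=1..n. a i * integral {0..(\<Sum>k=1..i. a k)} f))
             / ((Sup (f ` {0..}))\<^sup>2 * (\<Sum>k=1..n. a k) * (\<Sum>i=1..n. (a i)\<^sup>2)
                + (Sup (f ` {0..}))\<^sup>2 * (3/4) * (\<Sum>k=1..n. a k) ^ 3))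
     \<longrightarrow> (\<forall>\<pi>. \<pi> permutes {1..n} \<and> \<pi> \<noteq> id \<longrightarrow>
           exp_makespan (\<lambda>t. lb * f t) (sched a n id) 0
             < exp_makespan (\<lambda>t. lb * f t) (sched a n \<pi>) 0))
   \<and>
    ((\<forall>x y. 0 \<le> x \<longrightarrow> x < y \<longrightarrow> y \<le> (\<Sum>k=1..n. a k) \<longrightarrow> f x < f y) \<and>
     (\<forall>\<pi>. \<pi> permutes {1..n} \<and> (\<exists>i\<in>{1..n}. \<pi> i \<noteq> n + 1 - i) \<longrightarrow>
        lb < ((\<Sum>i=1..n. a (\<pi> i) * integral {0..(\<Sum>k=1..i. a (\<pi> k))} f)
                - (\<Sum>i=1..n. a (n + 1 - i) * integral {0..(\<Sum>k=n+1-i..n. a k)} f))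
             / ((Sup (f ` {0..}))\<^sup>2 * (\<Sum>k=1..n. a k) * (\<Sum>i=1..n. (a i)\<^sup>2)
                + (Sup (f ` {0..}))\<^sup>2 * (3/4) * (\<Sum>k=1..n. a k) ^ 3))
     \<longrightarrow> (\<forall>\<pi>. \<pi> permutes {1..n} \<and> (\<exists>i\<in>{1..n}. \<pi> i \<noteq> n + 1 - i) \<longrightarrow>
           exp_makespan (\<lambda>t. lb * f t) (sched a n (\<lambda>i. n + 1 - i)) 0
             < exp_makespan (\<lambda>t. lb * f t) (sched a n \<pi>) 0))"
proof -
  have "\<forall>i\<in>{1..n}. a i \<le> a n"
    using a_incr by (force simp: le_less)
  note gap_order = exp_makespan_less_if_integral_gap[OF a_pos this _ lb_pos f_pos f_diff f_inf f_sup lb_small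
      _ permutes_imp_bij]
  have LPT: "(\<Sum>i=1..n. a (n + 1 - i) * integral {0..\<Sum>k=1..i. a (n + 1 - k)} f)
      = (\<Sum>i=1..n. a (n + 1 - i) * integral {0..\<Sum>k=n + 1 - i..n. a k} f)"
    using sum_reverse_prefix[of _ n a] by (intro sum.cong) auto
  show ?thesis
    apply (intro conjI impI allI)
    subgoal premises prems for \<pi>
      using prems gap_order[OF _ bij_betw_id, of \<pi>] by (cases n) auto
    subgoal premises prems for \<pi>
      using prems gap_order[OF _ bij_betw_reverse, of \<pi>] LPT by (cases n) auto
    done
qed

end
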